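(* Let $\mathcal{I}$ be a meager ideal on $\mathbf{N}$. Then the set $$\{x \in (0,1] : \Gamma_b^k(x,\mathcal{I}) = \Delta_b^k \text{ for all integers } b\ge 2,\ k\ge 1\}$$ is comeager in $(0,1]$.
   Context: For an integer $b\ge 2$ and $x\in(0,1]$, write $x=\sum_{n\ge 1} d_{b,n}(x)/b^n$ for the unique nonterminating $b$-adic expansion, with digits $d_{b,n}(x)\in\{0,\dots,b-1\}$. Let $S_b^k$ be the set of all strings $\bm{s}=s_1\cdots s_k$ of length $k$ with $s_j\in\{0,\dots,b-1\}$. For $\bm{s}\in S_b^k$ and $n\ge1$ put $\pi_{b,\bm{s},n}(x)=\frac{1}{n}\#\{i\in\{1,\dots,n\}: d_{b,i+j-1}(x)=s_j \text{ for all } j=1,\dots,k\}$, and let $\bm{\pi}^k_{b,n}(x)=(\pi_{b,\bm{s},n}(x):\bm{s}\in S_b^k)\in\mathbf{R}^{b^k}$. Let $\Delta_b^k=\{(p_{\bm{s}})_{\bm{s}\in S_b^k}\in\mathbf{R}^{b^k}: \sum_{\bm{s}}p_{\bm{s}}=1,\ p_{\bm{s}}\ge0 \text{ for all } \bm{s},\ \text{and } \sum_{s_0}p_{s_0\bm{s}}=\sum_{s_k}p_{\bm{s}s_k} \text{ for all } \bm{s}\in S_b^{k-1}\}$, where $s_0\bm{s}$, $\bm{s}s_k$ denote concatenated strings and $s_0,s_k$ range over $\{0,\dots,b-1\}$. An ideal on $\mathbf{N}$ is a family $\mathcal{I}\subseteq\mathcal{P}(\mathbf{N})$ closed under finite unions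 and subsets, containing all finite sets, and different from $\mathcal{P}(\mathbf{N})$. $\mathcal{P}(\mathbf{N})$ carries the Cantor-space topology (identifying subsets with $\{0,1\}^{\mathbf{N}}$); $\mathcal{I}$ is meager if it is a meager subset of this space. For a sequence $(x_n)$ in $\mathbf{R}^d$, a point $\eta$ is an $\mathcal{I}$-cluster point if $\{n\in\mathbf{N}: x_n\in U\}\notin\mathcal{I}$ for every open neighborhood $U$ of $\eta$. $\Gamma_b^k(x,\mathcal{I})$ denotes the set of $\mathcal{I}$-cluster points of the sequence $(\bm{\pi}^k_{b,n}(x):n\ge1)$. *)

theory Defs
  imports "HOL-Analysis.Analysis"
begin

definition nowhere_dense_in :: "'a topology \<Rightarrow> 'a set \<Rightarrow> bool" where
  "nowhere_dense_in X A \<longleftrightarrow> A \<subseteq> topspace X \<and> X interior_of (X closure_of A) = {}"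

definition meager_in :: "'a topology \<Rightarrow> 'a set \<Rightarrow> bool" where
  "meager_in X A \<longleftrightarrow> (\<exists>F. countable F \<and> (\<forall>N\<in>F. nowhere_dense_in X N) \<and> A \<subseteq> \<Union>F)"

definition comeager_in :: "'a topology \<Rightarrow> 'a set \<Rightarrow> bool" where
  "comeager_in X A \<longleftrightarrow> meager_in X (topspace X - A)"

definition is_ideal :: "nat set set \<Rightarrow> bool" where
  "is_ideal I \<longleftrightarrow> (\<forall>A\<in>I. \<forall>B\<in>I. A \<union> B \<in> I) \<and> (\<forall>A\<in>I. \<forall>B. B \<subseteq> A \<longrightarrow> B \<in> I)
     \<and> (\<forall>A. finite A \<longrightarrow> A \<in> I) \<and> I \<noteq> UNIV"

(* P(N) identified with the Cantor space {0,1}^N = nat => bool (product of discrete bool) *)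
definition meager_ideal :: "nat set set \<Rightarrow> bool" where
  "meager_ideal I \<longleftrightarrow> meager_in (euclidean :: (nat \<Rightarrow> bool) topology) ((\<lambda>A n. n \<in> A) ` I)"

(* nonterminating b-adic digits; digit b x n is d_{b,n}(x) for n >= 1 *)
definition digits :: "nat \<Rightarrow> real \<Rightarrow> nat \<Rightarrow> nat" where
  "digits b x = (THE d. (\<forall>n. d n < b) \<and> d 0 = 0
       \<and> x = (\<Sum>n. real (d (Suc n)) / real b ^ Suc n)
       \<and> (\<forall>m. \<exists>n>m. d n \<noteq> 0))"

(* S_b^k, strings represented as lists; s!j is s_{j+1} *)
definition strings :: "nat \<Rightarrow> nat \<Rightarrow> nat list set" where
  "strings b k = {s. length s = k \<and> set s \<subseteq> {..<b}}"

definition freq :: "nat \<Rightarrow> nat list \<Rightarrow> nat \<Rightarrow> real \<Rightarrow> real" where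
  "freq b s n x = real (card {i \<in> {1..n}. \<forall>j<length s. digits b x (i + j) = s ! j}) / real n"

(* the vector pi^k_{b,n}(x) in R^{S_b^k}, extended by 0 outside S_b^k *)
definition freq_vec :: "nat \<Rightarrow> nat \<Rightarrow> nat \<Rightarrow> real \<Rightarrow> (nat list \<Rightarrow> real)" where
  "freq_vec b k n x = (\<lambda>s. if s \<in> strings b k then freq b s n x else 0)"

definition Delta :: "nat \<Rightarrow> nat \<Rightarrow> (nat list \<Rightarrow> real) set" where
  "Delta b k = {p. (\<forall>s. s \<notin> strings b k \<longrightarrow> p s = 0)
      \<and> (\<Sum>s\<in>strings b k. p s) = 1
      \<and> (\<forall>s\<in>strings b k. p s \<ge> 0)
      \<and> (\<forall>s\<in>strings b (k - 1). (\<Sum>a<b. p (a # s)) = (\<Sum>a<b. p (s @ [a])))}"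

(* I-cluster points of (freq_vec b k n x)_{n>=1}; topology on nat list => real is the
   product topology, which on the functions vanishing off the finite set S_b^k is that of R^(b^k) *)
definition Gamma :: "nat \<Rightarrow> nat \<Rightarrow> real \<Rightarrow> nat set set \<Rightarrow> (nat list \<Rightarrow> real) set" where
  "Gamma b k x I = {\<eta>. \<forall>U. open U \<and> \<eta> \<in> U \<longrightarrow> {n. n \<ge> 1 \<and> freq_vec b k n x \<in> U} \<notin> I}"

end

theory Submission
  imports Defs
begin

(* Frequency vectors sum to 1 and their balance defect is at most 1/n, so every
   I-cluster point lies in Delta_b^k.  Conversely, a point eta of Delta_b^k is a nonnegative
   circulation on the de Bruijn graph, hence a nonnegative combination of cycles, and is therefore
   approximated by the cyclic k-block frequencies of a single periodic word z.
   Since I is meager, there are finite sets F_j of integers > j such that every A in I contains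
   only finitely many of them.  If eta is not an I-cluster point of x, the set of n at which the
   frequency vector of x is close to that of z belongs to I, so from some m on it contains no F_j.
   For fixed z, precision and m this set of x is nowhere dense: any interval contains a b-adic
   interval whose points start with a fixed prefix followed by so many copies of z that the
   frequency vector is close to that of z at every n of some F_j.  Countably many such nowhere
   dense sets cover the complement of the set in the theorem. *)

section \<open>Baire category\<close>

lemma nowhere_dense_inD:
  assumes "nowhere_dense_in X A" "openin X V" "V \<noteq> {}"
  obtains W where "openin X W" "W \<noteq> {}" "W \<subseteq> V" "W \<inter> A = {}"
proof
  have "A \<subseteq> X closure_of A"
    using assms(1) by (simp add: nowhere_dense_in_def closure_of_subset)
  then show "(V - X closure_of A) \<inter> A = {}"
    by blast
  show "V - X closure_of A \<noteq> {}"
  proof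
    assume "V - X closure_of A = {}"
    then have "V \<subseteq> X interior_of (X closure_of A)"
      using assms(2) by (intro interior_of_maximal) auto
    with assms(1,3) show False
      by (simp add: nowhere_dense_in_def)
  qed
qed (use assms(2) in auto)

lemma nowhere_dense_inI:
  assumes "A \<subseteq> topspace X"
    and "\<And>V. openin X V \<Longrightarrow> V \<noteq> {} \<Longrightarrow> \<exists>W. openin X W \<and> W \<noteq> {} \<and> W \<subseteq> V \<and> W \<inter> A = {}"
  shows "nowhere_dense_in X A"
proof -
  have "X interior_of (X closure_of A) = {}"
  proof (rule ccontr)
    assume "X interior_of (X closure_of A) \<noteq> {}"
    then obtain W where W: "openin X W" "W \<noteq> {}" "W \<inter> A = {}"
        and "W \<subseteq> X closure_of A"
      using assms(2) interior_of_subset by (meson openin_interior_of subset_trans)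
    then obtain y where "y \<in> W" "y \<in> X closure_of A"
      by blast
    with W show False
      by (auto simp: in_closure_of)
  qed
  with assms(1) show ?thesis
    by (simp add: nowhere_dense_in_def)
qed

lemma nowhere_dense_imp_meager_in: "nowhere_dense_in X A \<Longrightarrow> meager_in X A"
  unfolding meager_in_def by (intro exI[of _ "{A}"]) auto

lemma meager_in_subset: "meager_in X B \<Longrightarrow> A \<subseteq> B \<Longrightarrow> meager_in X A"
  unfolding meager_in_def by (meson order_trans)

lemma meager_in_countable_UN:
  assumes "countable K" "\<And>i. i \<in> K \<Longrightarrow> meager_in X (A i)"
  shows "meager_in X (\<Union>i\<in>K. A i)"
proof -
  have "\<forall>i\<in>K. \<exists>F. countable F \<and> (\<forall>N\<in>F. nowhere_dense_in X N) \<and> A i \<subseteq> \<Union>F"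
    using assms(2) by (simp add: meager_in_def)
  then obtain F where F: "\<And>i. i \<in> K \<Longrightarrow> countable (F i)"
      "\<And>i. i \<in> K \<Longrightarrow> \<forall>N\<in>F i. nowhere_dense_in X N" "\<And>i. i \<in> K \<Longrightarrow> A i \<subseteq> \<Union>(F i)"
    by metis
  have "countable (\<Union>i\<in>K. F i)"
    using assms(1) F(1) by (rule countable_UN)
  moreover have "\<forall>N\<in>(\<Union>i\<in>K. F i). nowhere_dense_in X N"
    using F(2) by blast
  moreover have "(\<Union>i\<in>K. A i) \<subseteq> \<Union>(\<Union>i\<in>K. F i)"
    using F(3) by blast
  ultimately show ?thesis
    unfolding meager_in_def by blast
qed

lemma meager_in_nowhere_dense_sequence:
  assumes "meager_in X A"
  obtains C where "\<And>i::nat. nowhere_dense_in X (C i)" "A \<subseteq> (\<Union>i. C i)"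
proof -
  obtain F where F: "countable F" "\<forall>N\<in>F. nowhere_dense_in X N" "A \<subseteq> \<Union>F"
    using assms unfolding meager_in_def by blast
  have "nowhere_dense_in X {}"
    by (simp add: nowhere_dense_in_def)
  then have "nowhere_dense_in X (from_nat_into (insert {} F) i)" for i
    using F(2) from_nat_into[of "insert {} F" i] by auto
  moreover have "A \<subseteq> (\<Union>i. from_nat_into (insert {} F) i)"
    using F(1,3) range_from_nat_into[of "insert {} F"] by auto
  ultimately show ?thesis
    using that by blast
qed

section \<open>Cantor space and meager ideals\<close>

definition cylinder :: "bool list \<Rightarrow> (nat \<Rightarrow> bool) set" where
  "cylinder \<sigma> = {f. \<forall>i<length \<sigma>. f i = \<sigma> ! i}"

lemma cylinder_append_subset: "cylinder (\<sigma> @ \<tau>) \<subseteq> cylinder \<sigma>"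
  by (auto simp: cylinder_def nth_append)

lemma cylinder_nonempty: "cylinder \<sigma> \<noteq> {}"
proof -
  have "(\<lambda>i. i < length \<sigma> \<and> \<sigma> ! i) \<in> cylinder \<sigma>"
    by (simp add: cylinder_def)
  then show ?thesis
    by blast
qed

lemma open_cylinder: "open (cylinder \<sigma>)"
proof -
  have "cylinder \<sigma> = (\<Inter>i<length \<sigma>. (\<lambda>f. f i) -` {\<sigma> ! i})"
    by (auto simp: cylinder_def)
  moreover have "open ((\<lambda>f::nat \<Rightarrow> bool. f i) -` {b})" for i b
    by (rule open_vimage) (auto simp: open_discrete)
  ultimately show ?thesis
    by (auto intro!: open_INT)
qed

lemma cylinder_prefix_eq: "f \<in> cylinder \<sigma> \<Longrightarrow> map f [0..<length \<sigma>] = \<sigma>"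
  by (auto simp: cylinder_def intro: nth_equalityI)

lemma cylinder_prefix_mono: "M \<le> M' \<Longrightarrow> cylinder (map f [0..<M']) \<subseteq> cylinder (map f [0..<M])"
  by (auto simp: cylinder_def)

lemma cylinder_prefix_append:
  assumes "\<And>t. t < length s \<Longrightarrow> f (n + t) = s ! t"
  shows "f \<in> cylinder (map f [0..<n] @ s)"
  unfolding cylinder_def
proof (intro CollectI allI impI)
  fix i assume "i < length (map f [0..<n] @ s)"
  then show "f i = (map f [0..<n] @ s) ! i"
    using assms[of "i - n"] by (cases "i < n") (auto simp: nth_append)
qed

lemma open_contains_cylinder:
  fixes U :: "(nat \<Rightarrow> bool) set"
  assumes "open U" "f \<in> U"
  obtains M where "cylinder (map f [0..<M]) \<subseteq> U"
proof -
  have "openin (product_topology (\<lambda>i. euclidean) UNIV) U"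
    using assms(1) by (simp add: euclidean_product_topology)
  from product_topology_open_contains_basis[OF this assms(2)]
  obtain X where X: "f \<in> (\<Pi>\<^sub>E i\<in>UNIV. X i)" "finite {i. X i \<noteq> UNIV}" "(\<Pi>\<^sub>E i\<in>UNIV. X i) \<subseteq> U"
    by auto
  obtain M where M: "\<And>i. X i \<noteq> UNIV \<Longrightarrow> i < M"
    using X(2) finite_nat_set_iff_bounded by auto
  have "g \<in> U" if "g \<in> cylinder (map f [0..<M])" for g
  proof -
    have "g i \<in> X i" for i
      using that X(1) M[of i] by (cases "X i = UNIV") (auto simp: cylinder_def)
    then show ?thesis
      using X(3) by auto
  qed
  then show ?thesis
    using that by blast
qed

lemma nowhere_dense_avoiding_extension:
  assumes "nowhere_dense_in (euclidean :: (nat \<Rightarrow> bool) topology) N"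
  obtains \<tau> where "cylinder (\<sigma> @ \<tau>) \<inter> N = {}"
proof -
  obtain W where W: "open W" "W \<noteq> {}" "W \<subseteq> cylinder \<sigma>" "W \<inter> N = {}"
    using nowhere_dense_inD[OF assms, of "cylinder \<sigma>"] open_cylinder cylinder_nonempty by auto
  then obtain f where f: "f \<in> W"
    by blast
  obtain M where M: "cylinder (map f [0..<M]) \<subseteq> W"
    using open_contains_cylinder[OF W(1) f] by blast
  define M' where "M' = max M (length \<sigma>)"
  have "map f [0..<M'] = \<sigma> @ map f [length \<sigma>..<M']"
    using cylinder_prefix_eq[of f \<sigma>] f W(3) upt_add_eq_append[of 0 "length \<sigma>" "M' - length \<sigma>"]
    by (auto simp: M'_def)
  moreover have "cylinder (map f [0..<M']) \<subseteq> W"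
    using M cylinder_prefix_mono[of M M' f] by (auto simp: M'_def)
  ultimately have "cylinder (\<sigma> @ map f [length \<sigma>..<M']) \<inter> N = {}"
    using W(4) by auto
  then show ?thesis
    by (rule that)
qed

lemma nowhere_dense_avoiding_block:
  assumes "\<And>i. nowhere_dense_in (euclidean :: (nat \<Rightarrow> bool) topology) (C i)" "finite P"
  obtains s where "s \<noteq> []" "\<And>\<sigma> i. (\<sigma>, i) \<in> P \<Longrightarrow> cylinder (\<sigma> @ s) \<inter> C i = {}"
proof -
  from assms(2) have "\<exists>s. s \<noteq> [] \<and> (\<forall>\<sigma> i. (\<sigma>, i) \<in> P \<longrightarrow> cylinder (\<sigma> @ s) \<inter> C i = {})"
  proof (induction rule: finite_induct)
    case empty
    show ?case
      by auto
  next
    case (insert a P)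
    then obtain s where s: "s \<noteq> []" "\<forall>\<sigma> i. (\<sigma>, i) \<in> P \<longrightarrow> cylinder (\<sigma> @ s) \<inter> C i = {}"
      by blast
    obtain \<sigma>0 i0 where a: "a = (\<sigma>0, i0)"
      by (cases a)
    obtain \<tau> where \<tau>: "cylinder ((\<sigma>0 @ s) @ \<tau>) \<inter> C i0 = {}"
      using nowhere_dense_avoiding_extension[OF assms(1)] by blast
    have "cylinder (\<sigma> @ s @ \<tau>) \<inter> C i = {}" if "(\<sigma>, i) \<in> insert a P" for \<sigma> i
    proof (cases "(\<sigma>, i) = a")
      case True
      then show ?thesis
        using \<tau> a by simp
    next
      case False
      then have "cylinder (\<sigma> @ s) \<inter> C i = {}"
        using that s(2) by auto
      then show ?thesis
        using cylinder_append_subset[of "\<sigma> @ s" \<tau>] by auto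
    qed
    then show ?case
      using s(1) by blast
  qed
  then show ?thesis
    using that by blast
qed

lemma strict_mono_segment_unique:
  fixes pos :: "nat \<Rightarrow> nat"
  assumes "strict_mono pos" "pos j \<le> n" "n < pos (Suc j)" "pos j' \<le> n" "n < pos (Suc j')"
  shows "j = j'"
proof -
  have "pos j' < pos (Suc j)" "pos j < pos (Suc j')"
    using assms(2-5) by linarith+
  then have "j' < Suc j" "j < Suc j'"
    using strict_mono_less[OF assms(1)] by blast+
  then show ?thesis
    by simp
qed

lemma is_ideal_subset: "is_ideal I \<Longrightarrow> A \<in> I \<Longrightarrow> B \<subseteq> A \<Longrightarrow> B \<in> I"
  unfolding is_ideal_def by blast

lemma is_ideal_finite: "is_ideal I \<Longrightarrow> finite A \<Longrightarrow> A \<in> I"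
  unfolding is_ideal_def by blast

lemma nowhere_dense_block_sequence:
  assumes C: "\<And>i. nowhere_dense_in (euclidean :: (nat \<Rightarrow> bool) topology) (C i)"
  obtains pos :: "nat \<Rightarrow> nat" and blk :: "nat \<Rightarrow> bool list"
  where "strict_mono pos" "\<And>j. j < pos j" "\<And>j. pos (Suc j) = pos j + length (blk j)"
    "\<And>j \<sigma> i. length \<sigma> = pos j \<Longrightarrow> i \<le> j \<Longrightarrow> cylinder (\<sigma> @ blk j) \<inter> C i = {}"
proof -
  define good where
    "good n j s \<longleftrightarrow>
       s \<noteq> [] \<and> (\<forall>\<sigma> i. length \<sigma> = n \<and> i \<le> j \<longrightarrow> cylinder (\<sigma> @ s) \<inter> C i = {})" for n j s
  have "\<exists>s. good n j s" for n j
  proof -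
    have "finite {\<sigma>::bool list. length \<sigma> = n}"
      using finite_lists_length_eq[of "UNIV :: bool set" n] by simp
    then have "finite ({\<sigma>::bool list. length \<sigma> = n} \<times> {..j})"
      by blast
    then obtain s where s: "s \<noteq> []"
      "\<And>\<sigma> i. (\<sigma>, i) \<in> {\<sigma>. length \<sigma> = n} \<times> {..j} \<Longrightarrow> cylinder (\<sigma> @ s) \<inter> C i = {}"
      by (rule nowhere_dense_avoiding_block[of C, OF C]) blast
    have "good n j s"
      unfolding good_def using s by simp
    then show ?thesis ..
  qed
  then have good_some: "good n j (SOME s. good n j s)" for n j
    by (rule someI_ex)
  define pos where "pos = rec_nat (1::nat) (\<lambda>j p. p + length (SOME s. good p j s))"
  define blk where "blk j = (SOME s. good (pos j) j s)" for j
  have pos_Suc: "pos (Suc j) = pos j + length (blk j)" for j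
    by (simp add: pos_def blk_def)
  have blk: "good (pos j) j (blk j)" for j
    using good_some by (simp add: blk_def)
  have pos_less: "pos j < pos (Suc j)" for j
    using blk[of j] by (simp add: pos_Suc good_def)
  then have "strict_mono pos"
    by (rule strict_mono_Suc_iff[THEN iffD2, rule_format])
  moreover have "j < pos j" for j
  proof (induction j)
    case 0
    show ?case
      by (simp add: pos_def)
  next
    case (Suc j)
    with pos_less[of j] show ?case
      by linarith
  qed
  ultimately show ?thesis
    using that pos_Suc blk by (simp add: good_def)
qed

(* One direction of Talagrand's characterization of meager ideals. *)
lemma meager_ideal_block_sequence:
  assumes I: "is_ideal I" and "meager_ideal I"
  obtains F :: "nat \<Rightarrow> nat set"
  where "\<And>j. finite (F j)" "\<And>j n. n \<in> F j \<Longrightarrow> j < n"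
    "\<And>A. A \<in> I \<Longrightarrow> \<exists>m. \<forall>j\<ge>m. \<not> F j \<subseteq> A"
proof -
  define chr where "chr A = (\<lambda>n. n \<in> A)" for A :: "nat set"
  have "meager_in euclidean (chr ` I)"
    using assms(2) by (simp add: meager_ideal_def chr_def)
  then obtain C :: "nat \<Rightarrow> (nat \<Rightarrow> bool) set"
    where C: "\<And>i. nowhere_dense_in euclidean (C i)" "chr ` I \<subseteq> (\<Union>i. C i)"
    by (rule meager_in_nowhere_dense_sequence) blast
  obtain pos blk where mono: "strict_mono pos" and pos_gt: "\<And>j. j < pos j"
    and pos_Suc: "\<And>j. pos (Suc j) = pos j + length (blk j)"
    and avoid: "\<And>j \<sigma> i. length \<sigma> = pos j \<Longrightarrow> i \<le> j \<Longrightarrow> cylinder (\<sigma> @ blk j) \<inter> C i = {}"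
    by (rule nowhere_dense_block_sequence[of C, OF C(1)]) blast
  define F where "F j = {n. pos j \<le> n \<and> n < pos (Suc j) \<and> blk j ! (n - pos j)}" for j
  have "finite (F j)" for j
    by (rule finite_subset[of _ "{..<pos (Suc j)}"]) (auto simp: F_def)
  moreover have "j < n" if "n \<in> F j" for j n
    using that pos_gt[of j] by (simp add: F_def)
  moreover have "\<exists>m. \<forall>j\<ge>m. \<not> F j \<subseteq> A" if A: "A \<in> I" for A
  proof (rule ccontr)
    assume "\<not> ?thesis"
    then have often: "\<forall>m. \<exists>j\<ge>m. F j \<subseteq> A"
      by blast
    define A' where "A' = A \<inter> (\<Union>j. F j)"
    have "A' \<in> I"
      using is_ideal_subset[OF I A] by (simp add: A'_def)
    then obtain i where i: "chr A' \<in> C i"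
      using C(2) by blast
    obtain j where j: "i \<le> j" "F j \<subseteq> A"
      using often by blast
    \<comment> \<open>\<open>F j \<subseteq> A\<close> and the blocks occupy disjoint segments, so \<open>A'\<close> spells out \<open>blk j\<close> there\<close>
    have "chr A' (pos j + t) = blk j ! t" if t: "t < length (blk j)" for t
    proof -
      have "pos j + t \<in> F j' \<longleftrightarrow> j' = j \<and> blk j ! t" for j'
        using t strict_mono_segment_unique[OF mono, of j "pos j + t" j'] by (auto simp: F_def pos_Suc)
      then show ?thesis
        using j(2) by (auto simp: chr_def A'_def)
    qed
    then have "chr A' \<in> cylinder (map (chr A') [0..<pos j] @ blk j)"
      by (rule cylinder_prefix_append)
    moreover have "cylinder (map (chr A') [0..<pos j] @ blk j) \<inter> C i = {}"
      using avoid[of "map (chr A') [0..<pos j]" j i] j(1) by simp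
    ultimately show False
      using i by blast
  qed
  ultimately show ?thesis
    using that by blast
qed

section \<open>Nonterminating b-adic expansions\<close>

(* The largest integer strictly below x b^n: the first n digits of the nonterminating expansion,
   read as an integer. *)
definition adic_prefix :: "nat \<Rightarrow> real \<Rightarrow> nat \<Rightarrow> int" where
  "adic_prefix b x n = \<lceil>x * real b ^ n\<rceil> - 1"

definition adic_digit :: "nat \<Rightarrow> real \<Rightarrow> nat \<Rightarrow> nat" where
  "adic_digit b x n = (if n = 0 then 0 else nat (adic_prefix b x n - int b * adic_prefix b x (n - 1)))"

primrec adic_value :: "nat \<Rightarrow> (nat \<Rightarrow> nat) \<Rightarrow> nat \<Rightarrow> nat" where
  "adic_value b v 0 = 0"
| "adic_value b v (Suc n) = b * adic_value b v n + v (Suc n)"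

lemma adic_prefix_bounds:
  "real_of_int (adic_prefix b x n) < x * real b ^ n" "x * real b ^ n \<le> real_of_int (adic_prefix b x n) + 1"
  unfolding adic_prefix_def by linarith+

lemma adic_prefix_unique:
  assumes "real_of_int K < x * real b ^ n" "x * real b ^ n \<le> real_of_int K + 1"
  shows "adic_prefix b x n = K"
proof -
  have "\<lceil>x * real b ^ n\<rceil> = K + 1"
    using assms by (intro ceiling_unique) auto
  then show ?thesis
    by (simp add: adic_prefix_def)
qed

lemma adic_prefix_0: "0 < x \<Longrightarrow> x \<le> 1 \<Longrightarrow> adic_prefix b x 0 = 0"
  by (rule adic_prefix_unique) auto

lemma adic_prefix_Suc_bounds:
  assumes "b \<ge> 2"
  shows "0 \<le> adic_prefix b x (Suc n) - int b * adic_prefix b x n"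
    and "adic_prefix b x (Suc n) - int b * adic_prefix b x n < int b"
proof -
  have "real b * real_of_int (adic_prefix b x n) < real b * (x * real b ^ n)"
    "real b * (x * real b ^ n) \<le> real b * (real_of_int (adic_prefix b x n) + 1)"
    using adic_prefix_bounds[where b=b and x=x and n=n] assms by simp_all
  moreover note adic_prefix_bounds[where b=b and x=x and n="Suc n"]
  ultimately have "real_of_int (int b * adic_prefix b x n) < real_of_int (adic_prefix b x (Suc n) + 1)"
    "real_of_int (adic_prefix b x (Suc n)) < real_of_int (int b * adic_prefix b x n + int b)"
    by (simp_all add: algebra_simps)
  then show "0 \<le> adic_prefix b x (Suc n) - int b * adic_prefix b x n"
    "adic_prefix b x (Suc n) - int b * adic_prefix b x n < int b"
    unfolding of_int_less_iff by linarith+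
qed

lemma adic_digit_less: "b \<ge> 2 \<Longrightarrow> adic_digit b x n < b"
  using adic_prefix_Suc_bounds[of b x "n - 1"] by (cases n) (auto simp: adic_digit_def)

lemma adic_prefix_Suc:
  "b \<ge> 2 \<Longrightarrow> adic_prefix b x (Suc n) = int b * adic_prefix b x n + int (adic_digit b x (Suc n))"
  using adic_prefix_Suc_bounds[of b x n] by (simp add: adic_digit_def)

lemma adic_prefix_eq_adic_value:
  assumes "b \<ge> 2" "0 < x" "x \<le> 1"
  shows "adic_prefix b x n = int (adic_value b (adic_digit b x) n)"
  by (induction n) (simp_all add: adic_prefix_0[OF assms(2,3)] adic_prefix_Suc[OF assms(1)])

lemma adic_value_cong:
  "(\<And>i. 1 \<le> i \<Longrightarrow> i \<le> n \<Longrightarrow> v i = w i) \<Longrightarrow> adic_value b v n = adic_value b w n"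
  by (induction n) auto

lemma adic_value_partial_sum:
  assumes "b > 0"
  shows "real (adic_value b v n) / real b ^ n = (\<Sum>i<n. real (v (Suc i)) / real b ^ Suc i)"
proof (induction n)
  case (Suc n)
  then show ?case
    using assms by (simp add: field_simps)
qed simp

lemma adic_value_scaled_le: "i \<le> j \<Longrightarrow> adic_value b v i * b ^ (j - i) \<le> adic_value b v j"
proof (induction j rule: dec_induct)
  case (step j)
  have "adic_value b v i * b ^ (Suc j - i) = b * (adic_value b v i * b ^ (j - i))"
    using step.hyps by (simp add: Suc_diff_le)
  also have "\<dots> \<le> b * adic_value b v j"
    using step.IH by (rule mult_le_mono2)
  finally show ?case
    by simp
qed simp

lemma adic_value_less_scaled:
  assumes "i \<le> j" "\<And>n. i < n \<Longrightarrow> n \<le> j \<Longrightarrow> v n < b"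
  shows "adic_value b v j < (adic_value b v i + 1) * b ^ (j - i)"
  using assms
proof (induction j rule: dec_induct)
  case (step j)
  then have IH: "adic_value b v j + 1 \<le> (adic_value b v i + 1) * b ^ (j - i)"
    by simp
  have "adic_value b v (Suc j) < b * (adic_value b v j + 1)"
    using step.prems[of "Suc j"] step.hyps by simp
  also have "\<dots> \<le> b * ((adic_value b v i + 1) * b ^ (j - i))"
    using IH by (rule mult_le_mono2)
  also have "\<dots> = (adic_value b v i + 1) * b ^ (Suc j - i)"
    using step.hyps by (simp add: Suc_diff_le algebra_simps)
  finally show ?case .
qed simp

lemma adic_digit_sums:
  assumes "b \<ge> 2" "0 < x" "x \<le> 1"
  shows "(\<lambda>n. real (adic_digit b x (Suc n)) / real b ^ Suc n) sums x"
proof -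
  have upper: "real_of_int (adic_prefix b x n) / real b ^ n \<le> x" for n
    using adic_prefix_bounds(1)[where b=b and x=x and n=n] assms(1) by (simp add: field_simps)
  have lower: "x - (1 / real b) ^ n \<le> real_of_int (adic_prefix b x n) / real b ^ n" for n
  proof -
    have "x \<le> (real_of_int (adic_prefix b x n) + 1) / real b ^ n"
      using adic_prefix_bounds(2)[where b=b and x=x and n=n] assms(1) by (simp add: field_simps)
    then show ?thesis
      by (simp add: add_divide_distrib power_one_over)
  qed
  have lim: "(\<lambda>n. x - (1 / real b) ^ n) \<longlonglongrightarrow> x"
    using tendsto_diff[OF tendsto_const LIMSEQ_power_zero[of "1 / real b"]] assms(1) by simp
  have "(\<lambda>n. real_of_int (adic_prefix b x n) / real b ^ n) \<longlonglongrightarrow> x"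
    by (rule tendsto_sandwich[OF _ _ lim tendsto_const]) (use lower upper in auto)
  moreover have "real_of_int (adic_prefix b x n) / real b ^ n
      = (\<Sum>i<n. real (adic_digit b x (Suc i)) / real b ^ Suc i)" for n
    using adic_prefix_eq_adic_value[OF assms] adic_value_partial_sum[of b] assms(1) by simp
  ultimately show ?thesis
    unfolding sums_def by simp
qed

lemma adic_digit_nonterminating:
  assumes "b \<ge> 2" "0 < x" "x \<le> 1"
  shows "\<exists>n>m. adic_digit b x n \<noteq> 0"
proof (rule ccontr)
  assume "\<not> ?thesis"
  then have zero: "adic_digit b x n = 0" if "m < n" for n
    using that by auto
  define K where "K = adic_prefix b x m"
  have scale: "adic_prefix b x (m + j) = K * int b ^ j" for j
    by (induction j) (simp_all add: K_def adic_prefix_Suc[OF assms(1)] zero)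
  have gap: "0 < x * real b ^ m - K"
    using adic_prefix_bounds(1)[where b=b and x=x and n=m] by (simp add: K_def)
  obtain j where j: "1 / (x * real b ^ m - K) < real b ^ j"
    using real_arch_pow[of "real b"] assms(1) by auto
  have "x * real b ^ m * real b ^ j \<le> K * real b ^ j + 1"
    using adic_prefix_bounds(2)[where b=b and x=x and n="m + j"] by (simp add: scale power_add)
  then have "(x * real b ^ m - K) * real b ^ j \<le> 1"
    by (simp add: algebra_simps)
  with j gap show False
    by (simp add: field_simps)
qed

lemma digit_bound_tail_sums:
  assumes "b \<ge> 2"
  shows "(\<lambda>i. (real b - 1) / real b ^ Suc (i + n)) sums (1 / real b ^ n)"
proof -
  have q: "norm (1 / real b) < 1"
    using assms by simp
  have "(\<lambda>i. (real b - 1) / real b ^ Suc n * (1 / real b) ^ i)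
      sums ((real b - 1) / real b ^ Suc n * (1 / (1 - 1 / real b)))"
    by (rule sums_mult[OF geometric_sums[OF q]])
  moreover have "(real b - 1) / real b ^ Suc n * (1 / (1 - 1 / real b)) = 1 / real b ^ n"
    using assms by (simp add: field_simps)
  moreover have "(\<lambda>i. (real b - 1) / real b ^ Suc n * (1 / real b) ^ i) = (\<lambda>i. (real b - 1) / real b ^ Suc (i + n))"
    by (auto simp: field_simps power_add)
  ultimately show ?thesis
    by simp
qed

lemma nonterminating_expansion_prefix:
  assumes b: "b \<ge> 2" and d: "\<forall>n. d n < b" "\<forall>m. \<exists>n>m. d n \<noteq> 0"
    and x: "x = (\<Sum>n. real (d (Suc n)) / real b ^ Suc n)"
  shows "adic_prefix b x n = int (adic_value b d n)"
proof (rule adic_prefix_unique)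
  define f where "f i = real (d (Suc i)) / real b ^ Suc i" for i
  define g where "g i = (real b - 1) / real b ^ Suc i" for i
  have fg: "0 \<le> f i" "f i \<le> g i" for i
    using d(1)[rule_format, of "Suc i"] b
    by (simp_all add: f_def g_def divide_right_mono of_nat_diff[symmetric] less_Suc_eq_le[symmetric])
  have gs: "(\<lambda>i. g (i + n)) sums (1 / real b ^ n)" "g sums 1"
    using digit_bound_tail_sums[OF b, of n] digit_bound_tail_sums[OF b, of 0] by (simp_all add: g_def[abs_def])
  then have fs: "summable f"
    by (intro summable_comparison_test[OF _ sums_summable[OF gs(2)]]) (use fg in auto)
  have tail: "x - (\<Sum>i<n. f i) = (\<Sum>i. f (i + n))"
    using suminf_split_initial_segment[OF fs, of n] x unfolding f_def[abs_def] by simp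
  have fts: "summable (\<lambda>i. f (i + n))"
    using fs by (simp add: summable_iff_shift)
  obtain m where m: "m > n" "d m \<noteq> 0"
    using d(2) by blast
  have "0 < f (m - 1 - n + n)"
    using m b by (simp add: f_def Suc_diff_Suc)
  then have "0 < (\<Sum>i. f (i + n))"
    using fg(1) by (intro suminf_pos2[OF fts]) auto
  moreover have "(\<Sum>i. f (i + n)) \<le> 1 / real b ^ n"
    using suminf_le[OF _ fts sums_summable[OF gs(1)]] fg(2) sums_unique[OF gs(1)] by simp
  moreover have "(\<Sum>i<n. f i) = real (adic_value b d n) / real b ^ n"
    using adic_value_partial_sum[of b d n] b by (simp add: f_def)
  ultimately show "real_of_int (int (adic_value b d n)) < x * real b ^ n"
    "x * real b ^ n \<le> real_of_int (int (adic_value b d n)) + 1"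
    using tail b by (simp_all add: field_simps)
qed

lemma adic_digit_eq_of_prefix:
  assumes "\<And>i. i \<le> n \<Longrightarrow> adic_prefix b x i = int (adic_value b v i)" "1 \<le> n"
  shows "adic_digit b x n = v n"
proof -
  obtain m where "n = Suc m"
    using assms(2) by (cases n) auto
  with assms(1)[of n] assms(1)[of m] show ?thesis
    by (simp add: adic_digit_def)
qed

lemma digits_eq_adic_digit:
  assumes "b \<ge> 2" "0 < x" "x \<le> 1"
  shows "digits b x = adic_digit b x"
  unfolding digits_def
proof (rule the_equality)
  show "(\<forall>n. adic_digit b x n < b) \<and> adic_digit b x 0 = 0
    \<and> x = (\<Sum>n. real (adic_digit b x (Suc n)) / real b ^ Suc n) \<and> (\<forall>m. \<exists>n>m. adic_digit b x n \<noteq> 0)"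
    using adic_digit_less[OF assms(1)] adic_digit_sums[OF assms] adic_digit_nonterminating[OF assms]
    by (auto simp: adic_digit_def sums_iff)
next
  fix d
  assume d: "(\<forall>n. d n < b) \<and> d 0 = 0
    \<and> x = (\<Sum>n. real (d (Suc n)) / real b ^ Suc n) \<and> (\<forall>m. \<exists>n>m. d n \<noteq> 0)"
  show "d = adic_digit b x"
  proof
    fix n
    show "d n = adic_digit b x n"
      using d adic_digit_eq_of_prefix[of n b x d] nonterminating_expansion_prefix[OF assms(1)]
      by (cases "n = 0") (auto simp: adic_digit_def)
  qed
qed

lemma digits_less: "b \<ge> 2 \<Longrightarrow> 0 < x \<Longrightarrow> x \<le> 1 \<Longrightarrow> digits b x n < b"
  by (simp add: digits_eq_adic_digit adic_digit_less)

definition adic_interval :: "nat \<Rightarrow> (nat \<Rightarrow> nat) \<Rightarrow> nat \<Rightarrow> real set" where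
  "adic_interval b v n =
     {real (adic_value b v n) / real b ^ n <..< (real (adic_value b v n) + 1) / real b ^ n}"

lemma adic_interval_iff:
  "b > 0 \<Longrightarrow> x \<in> adic_interval b v n \<longleftrightarrow>
     real (adic_value b v n) < x * real b ^ n \<and> x * real b ^ n < real (adic_value b v n) + 1"
  by (simp add: adic_interval_def pos_divide_less_eq pos_less_divide_eq)

lemma adic_interval_nonempty: "b > 0 \<Longrightarrow> adic_interval b v n \<noteq> {}"
  using adic_interval_iff[of b "(real (adic_value b v n) + 1 / 2) / real b ^ n" v n] by auto

lemma adic_interval_prefix:
  "b > 0 \<Longrightarrow> x \<in> adic_interval b v n \<Longrightarrow> adic_prefix b x n = int (adic_value b v n)"
  by (rule adic_prefix_unique) (auto simp: adic_interval_iff)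

lemma adic_interval_mono:
  assumes "b > 0" "i \<le> j" "\<And>n. i < n \<Longrightarrow> n \<le> j \<Longrightarrow> v n < b"
  shows "adic_interval b v j \<subseteq> adic_interval b v i"
proof
  fix x assume x: "x \<in> adic_interval b v j"
  define B where "B = real b ^ (j - i)"
  have "B > 0"
    using assms(1) by (simp add: B_def)
  have "real (adic_value b v i * b ^ (j - i)) \<le> real (adic_value b v j)"
    "real (adic_value b v j + 1) \<le> real ((adic_value b v i + 1) * b ^ (j - i))"
    using adic_value_scaled_le[OF assms(2)] adic_value_less_scaled[of i j v b, OF assms(2) assms(3)]
    by (simp_all only: of_nat_mono Suc_le_eq[symmetric] Suc_eq_plus1)
  then have "real (adic_value b v i) * B \<le> real (adic_value b v j)"
    "real (adic_value b v j) + 1 \<le> (real (adic_value b v i) + 1) * B"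
    by (simp_all add: B_def algebra_simps)
  moreover have "x * real b ^ j = x * real b ^ i * B"
    using assms(2) by (simp add: B_def flip: power_add)
  ultimately have "real (adic_value b v i) * B < x * real b ^ i * B"
    "x * real b ^ i * B < (real (adic_value b v i) + 1) * B"
    using x assms(1) by (auto simp: adic_interval_iff)
  with \<open>B > 0\<close> assms(1) show "x \<in> adic_interval b v i"
    by (simp add: adic_interval_iff)
qed

lemma adic_interval_subset_unit:
  assumes "b > 0" "\<And>n. 0 < n \<Longrightarrow> n \<le> M \<Longrightarrow> v n < b"
  shows "adic_interval b v M \<subseteq> {0<..1}"
proof
  fix x assume x: "x \<in> adic_interval b v M"
  have "adic_value b v M + 1 \<le> b ^ M"
    using adic_value_less_scaled[of 0 M v b] assms(2) by simp
  then have "real (adic_value b v M) + 1 \<le> real b ^ M"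
    by (metis of_nat_Suc of_nat_le_iff of_nat_power Suc_eq_plus1 add.commute)
  with x assms(1) have "0 < x * real b ^ M" "x * real b ^ M < 1 * real b ^ M"
    by (auto simp only: adic_interval_iff intro: le_less_trans[OF of_nat_0_le_iff])
  with assms(1) show "x \<in> {0<..1}"
    by (simp only: zero_less_mult_iff mult_less_cancel_right) auto
qed

lemma adic_interval_digits:
  assumes "b \<ge> 2" "\<And>n. 0 < n \<Longrightarrow> n \<le> M \<Longrightarrow> v n < b" "x \<in> adic_interval b v M" "1 \<le> i" "i \<le> M"
  shows "digits b x i = v i"
proof -
  have "x \<in> {0<..1}"
    using adic_interval_subset_unit[of b M v] assms(1-3) by auto
  moreover have "adic_prefix b x j = int (adic_value b v j)" if "j \<le> i" for j
    using that assms adic_interval_mono[of b j M v] by (intro adic_interval_prefix) auto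
  ultimately show ?thesis
    using assms(1,4) by (simp add: digits_eq_adic_digit adic_digit_eq_of_prefix)
qed

lemma adic_interval_near:
  assumes "b \<ge> 2" "0 < c" "c \<le> 1" "\<And>i. 1 \<le> i \<Longrightarrow> i \<le> L \<Longrightarrow> v i = digits b c i"
  shows "adic_interval b v L \<subseteq> ball c ((1 / real b) ^ L)"
proof
  fix x assume x: "x \<in> adic_interval b v L"
  have "adic_value b v L = adic_value b (adic_digit b c) L"
    using assms by (intro adic_value_cong) (simp add: digits_eq_adic_digit)
  then have "adic_prefix b c L = int (adic_value b v L)"
    using adic_prefix_eq_adic_value[OF assms(1-3)] by simp
  then have "real (adic_value b v L) < c * real b ^ L" "c * real b ^ L \<le> real (adic_value b v L) + 1"
    using adic_prefix_bounds[where b=b and x=c and n=L] by simp_all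
  with x assms(1) have "(c - x) * real b ^ L < 1" "-1 < (c - x) * real b ^ L"
    by (auto simp: adic_interval_iff left_diff_distrib)
  then have "\<bar>c - x\<bar> * real b ^ L < 1"
    by (simp add: abs_mult[symmetric] abs_less_iff)
  with assms(1) show "x \<in> ball c ((1 / real b) ^ L)"
    by (simp add: dist_real_def power_one_over pos_less_divide_eq)
qed

section \<open>Cyclic words\<close>

lemma sum_lessThan_add:
  fixes f :: "nat \<Rightarrow> 'a::comm_monoid_add"
  shows "(\<Sum>t<m + n. f t) = (\<Sum>t<m. f t) + (\<Sum>t<n. f (m + t))"
  by (induction n) (simp_all add: add.assoc)

lemma periodic_mult:
  fixes f :: "nat \<Rightarrow> 'a"
  assumes "\<And>t. f (t + p) = f t"
  shows "f (q * p + t) = f t"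
proof (induction q)
  case (Suc q)
  have "f (Suc q * p + t) = f ((q * p + t) + p)"
    by (simp add: add.commute add.left_commute)
  also have "\<dots> = f t"
    using assms Suc.IH by simp
  finally show ?case .
qed simp

lemma sum_lessThan_periodic_mult:
  fixes f :: "nat \<Rightarrow> 'a::comm_semiring_1"
  assumes "\<And>t. f (t + p) = f t"
  shows "(\<Sum>t<q * p. f t) = of_nat q * (\<Sum>t<p. f t)"
proof (induction q)
  case (Suc q)
  have "(\<Sum>t<Suc q * p. f t) = (\<Sum>t<q * p. f t) + (\<Sum>t<p. f (q * p + t))"
    using sum_lessThan_add[where m="q * p" and n=p] by (simp add: add.commute)
  also have "\<dots> = of_nat (Suc q) * (\<Sum>t<p. f t)"
    using Suc.IH periodic_mult[where f=f and p=p and q=q, OF assms] by (simp add: ring_distribs add.commute)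
  finally show ?case .
qed simp

lemma sum_lessThan_periodic_approx:
  fixes f :: "nat \<Rightarrow> real"
  assumes per: "\<And>t. f (t + p) = f t" and "p > 0" and nonneg: "\<And>t. 0 \<le> f t"
  shows "\<bar>(\<Sum>t<N. f t) - real N * (\<Sum>t<p. f t) / real p\<bar> \<le> (\<Sum>t<p. f t)"
proof -
  define S where "S = (\<Sum>t<p. f t)"
  define r where "r = N mod p"
  have N: "N = N div p * p + r"
    by (simp add: r_def)
  have "r < p"
    using \<open>p > 0\<close> by (simp add: r_def)
  have "(\<Sum>t<N. f t) = real (N div p) * S + (\<Sum>t<r. f t)"
    by (subst N)
      (simp add: sum_lessThan_add sum_lessThan_periodic_mult[where f=f and p=p, OF per]
        periodic_mult[where f=f and p=p, OF per] S_def)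
  moreover have "0 \<le> (\<Sum>t<r. f t)" "(\<Sum>t<r. f t) \<le> S"
    using nonneg \<open>r < p\<close> by (auto simp: S_def intro: sum_nonneg sum_mono2)
  moreover have "real N * S / real p = real (N div p) * S + real r * S / real p"
    using \<open>p > 0\<close> by (subst N) (simp add: field_simps)
  moreover have "0 \<le> real r * S / real p" "real r * S / real p \<le> S"
    using \<open>r < p\<close> nonneg by (auto simp: S_def field_simps sum_nonneg intro!: mult_right_mono)
  ultimately show ?thesis
    unfolding S_def[symmetric] by linarith
qed

lemma sum_indicator_fibres:
  assumes "finite T" "finite E" "h ` T \<subseteq> E"
  shows "(\<Sum>s\<in>E. \<Sum>t\<in>T. if h t = s then 1 else 0) = real (card T)"
proof -
  have "(\<Sum>s\<in>E. \<Sum>t\<in>T. if h t = s then 1 else 0) = (\<Sum>t\<in>T. \<Sum>s\<in>E. if h t = s then 1 else (0::real))"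
    by (rule sum.swap)
  also have "\<dots> = (\<Sum>t\<in>T. 1)"
    using assms(2,3) by (intro sum.cong) (auto simp: sum.delta)
  finally show ?thesis
    by simp
qed

lemma sum_indicator_Cons:
  fixes w :: "'i \<Rightarrow> nat list"
  assumes "\<And>i. i \<in> A \<Longrightarrow> w i \<noteq> [] \<and> hd (w i) < b"
  shows "(\<Sum>a<b. \<Sum>i\<in>A. if w i = a # v then 1 else 0) = (\<Sum>i\<in>A. if tl (w i) = v then 1 else (0::real))"
proof -
  have "(\<Sum>a<b. if w i = a # v then 1 else 0) = (if tl (w i) = v then 1 else (0::real))" if "i \<in> A" for i
  proof -
    have "w i = a # v \<longleftrightarrow> a = hd (w i) \<and> tl (w i) = v" for a
      using assms[OF that] by (cases "w i") auto
    then have "(\<Sum>a<b. if w i = a # v then 1 else 0)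
        = (\<Sum>a<b. if a = hd (w i) then (if tl (w i) = v then 1 else 0) else (0::real))"
      by (intro sum.cong) auto
    also have "\<dots> = (if tl (w i) = v then 1 else 0)"
      using assms[OF that] by simp
    finally show ?thesis .
  qed
  then show ?thesis
    by (subst sum.swap) simp
qed

lemma sum_indicator_snoc:
  fixes w :: "'i \<Rightarrow> nat list"
  assumes "\<And>i. i \<in> A \<Longrightarrow> w i \<noteq> [] \<and> last (w i) < b"
  shows "(\<Sum>a<b. \<Sum>i\<in>A. if w i = v @ [a] then 1 else 0) = (\<Sum>i\<in>A. if butlast (w i) = v then 1 else (0::real))"
proof -
  have "(\<Sum>a<b. if w i = v @ [a] then 1 else 0) = (if butlast (w i) = v then 1 else (0::real))" if "i \<in> A" for i
  proof -
    have "w i = v @ [a] \<longleftrightarrow> a = last (w i) \<and> butlast (w i) = v" for a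
      using assms[OF that] by (metis append_butlast_last_id butlast_snoc last_snoc)
    then have "(\<Sum>a<b. if w i = v @ [a] then 1 else 0)
        = (\<Sum>a<b. if a = last (w i) then (if butlast (w i) = v then 1 else 0) else (0::real))"
      by (intro sum.cong) auto
    also have "\<dots> = (if butlast (w i) = v then 1 else 0)"
      using assms[OF that] by simp
    finally show ?thesis .
  qed
  then show ?thesis
    by (subst sum.swap) simp
qed

lemma finite_strings: "finite (strings b k)"
proof -
  have "strings b k = {xs. set xs \<subseteq> {..<b} \<and> length xs = k}"
    by (auto simp: strings_def)
  then show ?thesis
    by (simp add: finite_lists_length_eq)
qed

lemma Cons_in_strings: "a # v \<in> strings b k \<longleftrightarrow> a < b \<and> v \<in> strings b (k - 1) \<and> k \<ge> 1"
  by (auto simp: strings_def)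

lemma snoc_in_strings: "v @ [a] \<in> strings b k \<longleftrightarrow> a < b \<and> v \<in> strings b (k - 1) \<and> k \<ge> 1"
  by (auto simp: strings_def)

definition cyclic_window :: "nat list \<Rightarrow> nat \<Rightarrow> nat \<Rightarrow> nat list" where
  "cyclic_window z k t = map (\<lambda>j. z ! ((t + j) mod length z)) [0..<k]"

definition cyclic_count :: "nat list \<Rightarrow> nat \<Rightarrow> nat list \<Rightarrow> real" where
  "cyclic_count z k s = (\<Sum>t<length z. if cyclic_window z k t = s then 1 else 0)"

lemma length_cyclic_window [simp]: "length (cyclic_window z k t) = k"
  by (simp add: cyclic_window_def)

lemma nth_cyclic_window: "j < k \<Longrightarrow> cyclic_window z k t ! j = z ! ((t + j) mod length z)"
  by (simp add: cyclic_window_def)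

lemma cyclic_window_periodic: "cyclic_window z k (t + length z) = cyclic_window z k t"
  by (simp add: cyclic_window_def add.commute[of t] add.assoc)

lemma tl_cyclic_window: "tl (cyclic_window z k t) = cyclic_window z (k - 1) (Suc t)"
  by (rule nth_equalityI) (auto simp: nth_tl nth_cyclic_window)

lemma butlast_cyclic_window: "butlast (cyclic_window z k t) = cyclic_window z (k - 1) t"
  by (rule nth_equalityI) (auto simp: nth_butlast nth_cyclic_window)

lemma cyclic_window_in_strings:
  assumes "set z \<subseteq> {..<b}" "z \<noteq> []"
  shows "cyclic_window z k t \<in> strings b k"
proof -
  have "z ! ((t + j) mod length z) < b" for j
    using assms by (auto simp: subset_iff)
  then show ?thesis
    by (auto simp: strings_def cyclic_window_def)
qed

lemma cyclic_count_nonneg: "0 \<le> cyclic_count z k s"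
  by (simp add: cyclic_count_def sum_nonneg)

lemma cyclic_count_le_length: "cyclic_count z k s \<le> real (length z)"
  unfolding cyclic_count_def using sum_mono[of "{..<length z}" _ "\<lambda>_. 1::real"] by simp

lemma cyclic_count_eq_0:
  assumes "set z \<subseteq> {..<b}" "s \<notin> strings b k"
  shows "cyclic_count z k s = 0"
  using cyclic_window_in_strings[OF assms(1)] assms(2)
  by (cases "z = []") (auto simp: cyclic_count_def intro!: sum.neutral)

lemma cyclic_count_pos_imp_window:
  "0 < cyclic_count z k s \<Longrightarrow> \<exists>t<length z. cyclic_window z k t = s"
  by (rule ccontr) (simp add: cyclic_count_def)

lemma sum_cyclic_count:
  assumes "set z \<subseteq> {..<b}"
  shows "(\<Sum>s\<in>strings b k. cyclic_count z k s) = real (length z)"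
proof (cases "z = []")
  case False
  then show ?thesis
    unfolding cyclic_count_def
    using sum_indicator_fibres[of "{..<length z}" "strings b k" "cyclic_window z k"]
      cyclic_window_in_strings[OF assms False] finite_strings
    by auto
qed (simp add: cyclic_count_def)

lemma sum_shift_cyclic_window:
  "(\<Sum>t<length z. if cyclic_window z k (Suc t) = s then 1 else 0) = cyclic_count z k s"
proof -
  define g where "g t = (if cyclic_window z k t = s then 1 else (0::real))" for t
  have "g (length z) = g 0"
    using cyclic_window_periodic[of z k 0] by (simp add: g_def)
  then have "(\<Sum>t<Suc (length z). g t) - g 0 = (\<Sum>t<length z. g t)"
    by simp
  moreover have "(\<Sum>t<Suc (length z). g t) = g 0 + (\<Sum>t<length z. g (Suc t))"
    by (rule sum.lessThan_Suc_shift)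
  ultimately show ?thesis
    by (simp add: g_def cyclic_count_def)
qed

lemma cyclic_window_hd_last:
  assumes "set z \<subseteq> {..<b}" "z \<noteq> []" "k \<ge> 1"
  shows "cyclic_window z k t \<noteq> []" "hd (cyclic_window z k t) < b" "last (cyclic_window z k t) < b"
proof -
  have w: "cyclic_window z k t \<in> strings b k"
    by (rule cyclic_window_in_strings[OF assms(1,2)])
  show ne: "cyclic_window z k t \<noteq> []"
    using assms(3) by (metis length_cyclic_window list.size(3) not_one_le_zero)
  show "hd (cyclic_window z k t) < b" "last (cyclic_window z k t) < b"
    using w hd_in_set[OF ne] last_in_set[OF ne] by (auto simp: strings_def)
qed

lemma sum_cyclic_count_Cons:
  assumes "set z \<subseteq> {..<b}" "k \<ge> 1"
  shows "(\<Sum>a<b. cyclic_count z k (a # v)) = cyclic_count z (k - 1) v"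
proof (cases "z = []")
  case False
  then show ?thesis
    unfolding cyclic_count_def
    using sum_indicator_Cons[of "{..<length z}" "cyclic_window z k" b v] cyclic_window_hd_last[OF assms(1) False assms(2)]
    by (simp add: tl_cyclic_window sum_shift_cyclic_window[unfolded cyclic_count_def])
qed (simp add: cyclic_count_def)

lemma sum_cyclic_count_snoc:
  assumes "set z \<subseteq> {..<b}" "k \<ge> 1"
  shows "(\<Sum>a<b. cyclic_count z k (v @ [a])) = cyclic_count z (k - 1) v"
proof (cases "z = []")
  case False
  then show ?thesis
    unfolding cyclic_count_def
    using sum_indicator_snoc[of "{..<length z}" "cyclic_window z k" b v] cyclic_window_hd_last[OF assms(1) False assms(2)]
    by (simp add: butlast_cyclic_window)
qed (simp add: cyclic_count_def)

lemma nth_concat_replicate: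
  "i < q * length z \<Longrightarrow> concat (replicate q z) ! i = z ! (i mod length z)"
proof (induction q arbitrary: i)
  case (Suc q)
  show ?case
  proof (cases "i < length z")
    case False
    then have "concat (replicate q z) ! (i - length z) = z ! ((i - length z) mod length z)"
      using Suc by (intro Suc.IH) auto
    then show ?thesis
      using False by (simp add: nth_append le_mod_geq)
  qed (simp add: nth_append)
qed simp

lemma cyclic_count_concat_replicate:
  "cyclic_count (concat (replicate q z)) k s = real q * cyclic_count z k s"
proof -
  have "cyclic_window (concat (replicate q z)) k t = cyclic_window z k t" if "t < q * length z" for t
  proof (rule nth_equalityI)
    fix j assume "j < length (cyclic_window (concat (replicate q z)) k t)"
    moreover have "(t + j) mod (q * length z) < q * length z"
      by (rule mod_less_divisor) (use that in linarith)
    moreover have "(t + j) mod (q * length z) mod length z = (t + j) mod length z"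
      by (simp add: mod_mod_cancel)
    ultimately show "cyclic_window (concat (replicate q z)) k t ! j = cyclic_window z k t ! j"
      by (simp add: nth_cyclic_window length_concat sum_list_replicate nth_concat_replicate)
  qed simp
  then have "cyclic_count (concat (replicate q z)) k s
      = (\<Sum>t<q * length z. if cyclic_window z k t = s then 1 else 0)"
    unfolding cyclic_count_def by (intro sum.cong) (auto simp: length_concat sum_list_replicate)
  also have "\<dots> = real q * cyclic_count z k s"
    unfolding cyclic_count_def by (rule sum_lessThan_periodic_mult) (simp add: cyclic_window_periodic)
  finally show ?thesis .
qed

lemma sum_indicator_late_windows: "(\<Sum>t<n. if n < t + k then 1 else 0) \<le> (real k :: real)"
proof -
  have "(\<Sum>t<n. if n < t + k then 1 else (0::real)) = real (card {t. t < n \<and> n < t + k})"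
    by (simp add: sum.If_cases lessThan_def Collect_conj_eq)
  also have "card {t. t < n \<and> n < t + k} \<le> card {n - k..<n}"
    by (rule card_mono) auto
  finally show ?thesis
    by simp
qed

lemma cyclic_count_segment:
  assumes "d + length u \<le> length W" "\<And>i. i < length u \<Longrightarrow> W ! (d + i) = u ! i"
  shows "\<bar>(\<Sum>t<length u. if cyclic_window W k (d + t) = s then 1 else 0) - cyclic_count u k s\<bar> \<le> real k"
proof -
  have "cyclic_window W k (d + t) = cyclic_window u k t" if "t + k \<le> length u" for t
    using that assms by (intro nth_equalityI) (auto simp: nth_cyclic_window add.assoc)
  then have "\<bar>(if cyclic_window W k (d + t) = s then 1 else 0) - (if cyclic_window u k t = s then 1 else 0)\<bar>
      \<le> (if length u < t + k then 1 else (0::real))" for t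
    by (cases "length u < t + k") auto
  then have "\<bar>\<Sum>t<length u. (if cyclic_window W k (d + t) = s then 1 else 0) - (if cyclic_window u k t = s then 1 else 0)\<bar>
      \<le> (\<Sum>t<length u. if length u < t + k then 1 else (0::real))"
    by (intro order_trans[OF sum_abs] sum_mono)
  then show ?thesis
    using sum_indicator_late_windows[of "length u" k] by (simp add: cyclic_count_def sum_subtractf)
qed

lemma cyclic_count_append: "\<bar>cyclic_count (u @ v) k s - cyclic_count u k s - cyclic_count v k s\<bar> \<le> 2 * real k"
proof -
  have "cyclic_count (u @ v) k s
      = (\<Sum>t<length u. if cyclic_window (u @ v) k t = s then 1 else 0)
        + (\<Sum>t<length v. if cyclic_window (u @ v) k (length u + t) = s then 1 else 0)"
    by (simp add: cyclic_count_def sum_lessThan_add)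
  moreover have "\<bar>(\<Sum>t<length u. if cyclic_window (u @ v) k (0 + t) = s then 1 else 0) - cyclic_count u k s\<bar> \<le> real k"
    by (rule cyclic_count_segment) (auto simp: nth_append)
  moreover have "\<bar>(\<Sum>t<length v. if cyclic_window (u @ v) k (length u + t) = s then 1 else 0) - cyclic_count v k s\<bar> \<le> real k"
    by (rule cyclic_count_segment) (auto simp: nth_append)
  ultimately show ?thesis
    by simp
qed

section \<open>Circulations on the de Bruijn graph\<close>

(* A nonnegative circulation on the de Bruijn graph whose edges are the strings of length k,
   each leading from its prefix of length k - 1 to its suffix of length k - 1. *)
definition circulation :: "nat \<Rightarrow> nat \<Rightarrow> (nat list \<Rightarrow> real) \<Rightarrow> bool" where
  "circulation b k \<eta> \<longleftrightarrow> (\<forall>s. s \<notin> strings b k \<longrightarrow> \<eta> s = 0) \<and> (\<forall>s\<in>strings b k. 0 \<le> \<eta> s)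
     \<and> (\<forall>v\<in>strings b (k - 1). (\<Sum>a<b. \<eta> (a # v)) = (\<Sum>a<b. \<eta> (v @ [a])))"

definition cyclically_approximable :: "nat \<Rightarrow> nat \<Rightarrow> (nat list \<Rightarrow> real) \<Rightarrow> bool" where
  "cyclically_approximable b k \<eta> \<longleftrightarrow> (\<forall>\<epsilon>>0. \<exists>z t. set z \<subseteq> {..<b} \<and> 0 \<le> t
     \<and> (\<forall>s\<in>strings b k. \<bar>t * cyclic_count z k s - \<eta> s\<bar> < \<epsilon>))"

lemma cyclically_approximable_cyclic_count:
  "set y \<subseteq> {..<b} \<Longrightarrow> 0 \<le> c \<Longrightarrow> cyclically_approximable b k (\<lambda>s. c * cyclic_count y k s)"
  unfolding cyclically_approximable_def by (intro allI impI exI[of _ y] exI[of _ c]) auto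

lemma nat_floor_approx:
  assumes "0 \<le> x" "N > 0"
  shows "\<bar>real (nat \<lfloor>real N * x\<rfloor>) / real N - x\<bar> \<le> 1 / real N"
proof -
  have "0 \<le> real N * x"
    using assms by simp
  then have "real (nat \<lfloor>real N * x\<rfloor>) \<le> real N * x" "real N * x - 1 < real (nat \<lfloor>real N * x\<rfloor>)"
    by linarith+
  then have "\<bar>real (nat \<lfloor>real N * x\<rfloor>) - real N * x\<bar> \<le> 1"
    by linarith
  then have "\<bar>real (nat \<lfloor>real N * x\<rfloor>) - real N * x\<bar> / real N \<le> 1 / real N"
    by (rule divide_right_mono) simp
  moreover have "real (nat \<lfloor>real N * x\<rfloor>) / real N - x = (real (nat \<lfloor>real N * x\<rfloor>) - real N * x) / real N"
    using assms(2) by (simp add: field_simps)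
  ultimately show ?thesis
    by (simp add: abs_divide)
qed

lemma cyclic_count_repetitions:
  assumes "N > 0" "\<bar>real p / real N - t1\<bar> \<le> 1 / real N" "\<bar>real q / real N - t2\<bar> \<le> 1 / real N"
  shows "\<bar>cyclic_count (concat (replicate p z1) @ concat (replicate q z2)) k s / real N
      - (t1 * cyclic_count z1 k s + t2 * cyclic_count z2 k s)\<bar>
    \<le> (real (length z1) + real (length z2) + 2 * real k) / real N"
proof -
  let ?Z = "concat (replicate p z1) @ concat (replicate q z2)"
  let ?c1 = "cyclic_count z1 k s" and ?c2 = "cyclic_count z2 k s"
  have "\<bar>cyclic_count ?Z k s - real p * ?c1 - real q * ?c2\<bar> \<le> 2 * real k"
    using cyclic_count_append[of "concat (replicate p z1)" "concat (replicate q z2)" k s]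
    by (simp add: cyclic_count_concat_replicate)
  moreover have "cyclic_count ?Z k s / real N - real p / real N * ?c1 - real q / real N * ?c2
      = (cyclic_count ?Z k s - real p * ?c1 - real q * ?c2) / real N"
    by (simp add: diff_divide_distrib)
  ultimately have seam: "\<bar>cyclic_count ?Z k s / real N - real p / real N * ?c1 - real q / real N * ?c2\<bar>
      \<le> 2 * real k / real N"
    by (simp add: abs_divide divide_right_mono)
  have "\<bar>real p / real N * ?c1 - t1 * ?c1\<bar> = \<bar>real p / real N - t1\<bar> * ?c1"
    using cyclic_count_nonneg[of z1 k s] by (simp only: left_diff_distrib[symmetric] abs_mult abs_of_nonneg)
  also have "\<dots> \<le> 1 / real N * real (length z1)"
    using assms(2) cyclic_count_le_length cyclic_count_nonneg by (intro mult_mono) auto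
  finally have r1: "\<bar>real p / real N * ?c1 - t1 * ?c1\<bar> \<le> 1 / real N * real (length z1)" .
  have "\<bar>real q / real N * ?c2 - t2 * ?c2\<bar> = \<bar>real q / real N - t2\<bar> * ?c2"
    using cyclic_count_nonneg[of z2 k s] by (simp only: left_diff_distrib[symmetric] abs_mult abs_of_nonneg)
  also have "\<dots> \<le> 1 / real N * real (length z2)"
    using assms(3) cyclic_count_le_length cyclic_count_nonneg by (intro mult_mono) auto
  finally have r2: "\<bar>real q / real N * ?c2 - t2 * ?c2\<bar> \<le> 1 / real N * real (length z2)" .
  have "(real (length z1) + real (length z2) + 2 * real k) / real N
      = 1 / real N * real (length z1) + 1 / real N * real (length z2) + 2 * real k / real N"
    by (simp add: add_divide_distrib)
  with seam r1 r2 show ?thesis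
    unfolding abs_le_iff by linarith
qed

lemma cyclically_approximable_add:
  assumes "cyclically_approximable b k \<eta>1" "cyclically_approximable b k \<eta>2"
  shows "cyclically_approximable b k (\<lambda>s. \<eta>1 s + \<eta>2 s)"
  unfolding cyclically_approximable_def
proof (intro allI impI)
  fix \<epsilon> :: real assume "\<epsilon> > 0"
  then have "\<epsilon> / 3 > 0"
    by simp
  then obtain z1 t1 z2 t2
    where z1: "set z1 \<subseteq> {..<b}" "0 \<le> t1" "\<forall>s\<in>strings b k. \<bar>t1 * cyclic_count z1 k s - \<eta>1 s\<bar> < \<epsilon> / 3"
      and z2: "set z2 \<subseteq> {..<b}" "0 \<le> t2" "\<forall>s\<in>strings b k. \<bar>t2 * cyclic_count z2 k s - \<eta>2 s\<bar> < \<epsilon> / 3"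
    using assms unfolding cyclically_approximable_def by blast
  define C where "C = real (length z1) + real (length z2) + 2 * real k"
  obtain N0 :: nat where "3 * C / \<epsilon> < real N0"
    using reals_Archimedean2 by blast
  define N where "N = Suc N0"
  have "3 * C < real N0 * \<epsilon>"
    using \<open>3 * C / \<epsilon> < real N0\<close> \<open>\<epsilon> > 0\<close> by (simp add: pos_divide_less_eq)
  then have "N > 0" "3 * C < \<epsilon> * real N"
    using \<open>\<epsilon> > 0\<close> by (simp_all add: N_def algebra_simps)
  then have "C / real N < \<epsilon> / 3"
    by (simp add: field_simps)
  define Z where "Z = concat (replicate (nat \<lfloor>real N * t1\<rfloor>) z1) @ concat (replicate (nat \<lfloor>real N * t2\<rfloor>) z2)"
  have "\<bar>cyclic_count Z k s / real N - (\<eta>1 s + \<eta>2 s)\<bar> < \<epsilon>" if s: "s \<in> strings b k" for s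
  proof -
    have "\<bar>cyclic_count Z k s / real N - (t1 * cyclic_count z1 k s + t2 * cyclic_count z2 k s)\<bar> \<le> C / real N"
      unfolding Z_def C_def
      by (rule cyclic_count_repetitions[OF \<open>N > 0\<close> nat_floor_approx[OF z1(2)] nat_floor_approx[OF z2(2)]])
        (use \<open>N > 0\<close> in simp_all)
    with \<open>C / real N < \<epsilon> / 3\<close> z1(3)[rule_format, OF s] z2(3)[rule_format, OF s] show ?thesis
      unfolding abs_le_iff abs_less_iff by linarith
  qed
  moreover have "set Z \<subseteq> {..<b}"
    using z1(1) z2(1) by (auto simp: Z_def)
  ultimately show "\<exists>z t. set z \<subseteq> {..<b} \<and> 0 \<le> t
      \<and> (\<forall>s\<in>strings b k. \<bar>t * cyclic_count z k s - (\<eta>1 s + \<eta>2 s)\<bar> < \<epsilon>)"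
    by (intro exI[of _ Z] exI[of _ "1 / real N"]) auto
qed

lemma circulation_pos_in_strings: "circulation b k \<eta> \<Longrightarrow> 0 < \<eta> s \<Longrightarrow> s \<in> strings b k"
  unfolding circulation_def by force

lemma circulation_successor:
  assumes c: "circulation b k \<eta>" and "k \<ge> 1" and w: "w \<in> strings b k" "\<eta> w > 0"
  shows "\<exists>a<b. \<eta> (tl w @ [a]) > 0"
proof (rule ccontr)
  assume "\<not> ?thesis"
  then have "(\<Sum>a<b. \<eta> (tl w @ [a])) \<le> 0"
    by (intro sum_nonpos) auto
  have "w \<noteq> []"
    using w(1) \<open>k \<ge> 1\<close> by (auto simp: strings_def)
  then have w_eq: "w = hd w # tl w" and "hd w < b" "tl w \<in> strings b (k - 1)"
    using w(1) by (auto simp: strings_def dest: list.set_sel)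
  have "\<eta> (hd w # tl w) \<le> (\<Sum>a<b. \<eta> (a # tl w))"
    using c \<open>hd w < b\<close> \<open>tl w \<in> strings b (k - 1)\<close> \<open>k \<ge> 1\<close>
    by (intro member_le_sum) (auto simp: circulation_def Cons_in_strings)
  also have "\<dots> = (\<Sum>a<b. \<eta> (tl w @ [a]))"
    using c \<open>tl w \<in> strings b (k - 1)\<close> by (simp add: circulation_def)
  finally show False
    using w(2) w_eq \<open>(\<Sum>a<b. \<eta> (tl w @ [a])) \<le> 0\<close> by simp
qed

lemma circulation_walk:
  assumes c: "circulation b k \<eta>" and "k \<ge> 1" and s0: "s0 \<in> strings b k" "\<eta> s0 > 0"
  obtains e :: "nat \<Rightarrow> nat"
  where "\<And>n. map (\<lambda>u. e (n + u)) [0..<k] \<in> strings b k" "\<And>n. \<eta> (map (\<lambda>u. e (n + u)) [0..<k]) > 0"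
proof -
  define good where "good w \<longleftrightarrow> w \<in> strings b k \<and> \<eta> w > 0" for w
  define next_window where "next_window w = tl w @ [SOME a. a < b \<and> \<eta> (tl w @ [a]) > 0]" for w
  have good_next: "good (next_window w)" if "good w" for w
  proof -
    have "\<exists>a. a < b \<and> \<eta> (tl w @ [a]) > 0"
      using circulation_successor[OF c \<open>k \<ge> 1\<close>] that by (auto simp: good_def)
    from someI_ex[OF this] have "\<eta> (next_window w) > 0"
      unfolding next_window_def by blast
    moreover have "next_window w \<in> strings b k"
      using circulation_pos_in_strings[OF c \<open>\<eta> (next_window w) > 0\<close>] .
    ultimately show ?thesis
      by (simp add: good_def)
  qed
  define f where "f n = (next_window ^^ n) s0" for n
  have f_good: "good (f n)" for n
    by (induction n) (use s0 good_next in \<open>auto simp: f_def good_def\<close>)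
  then have f_len: "length (f n) = k" for n
    by (simp add: good_def strings_def)
  define e where "e n = hd (f n)" for n
  have "f n ! j = e (n + j)" if "j < k" for n j
    using that
  proof (induction j arbitrary: n)
    case 0
    then have "f n \<noteq> []"
      using f_len[of n] by auto
    then show ?case
      by (simp add: e_def hd_conv_nth)
  next
    case (Suc j)
    have "j < length (tl (f n))"
      using Suc.prems f_len[of n] by simp
    then have "f n ! Suc j = next_window (f n) ! j"
      by (simp add: next_window_def nth_tl nth_append)
    also have "\<dots> = f (Suc n) ! j"
      by (simp add: f_def)
    also have "\<dots> = e (Suc n + j)"
      using Suc by simp
    finally show ?case
      by simp
  qed
  then have "f n = map (\<lambda>u. e (n + u)) [0..<k]" for n
    using f_len[of n] by (intro nth_equalityI) auto
  then show ?thesis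
    using that f_good by (metis good_def)
qed

lemma cyclic_window_of_repeated_window:
  fixes e :: "nat \<Rightarrow> nat"
  assumes "i < j" "\<And>u. u < k \<Longrightarrow> e (i + u) = e (j + u)" "t < j - i"
  shows "cyclic_window (map (\<lambda>t. e (i + t)) [0..<j - i]) k t = map (\<lambda>u. e (i + t + u)) [0..<k]"
proof -
  define p where "p = j - i"
  have "p > 0"
    using assms(1) by (simp add: p_def)
  have wrap: "e (i + m mod p) = e (i + m)" if "m < p + k" for m
    using that
  proof (induction m rule: less_induct)
    case (less m)
    show ?case
    proof (cases "m < p")
      case False
      then have "e (i + (m - p) mod p) = e (i + (m - p))"
        using less \<open>p > 0\<close> by simp
      moreover have "j + (m - p) = i + m"
        using False assms(1) by (simp add: p_def)
      then have "e (i + (m - p)) = e (i + m)"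
        using assms(2)[of "m - p"] False less.prems by simp
      ultimately show ?thesis
        using False by (simp add: le_mod_geq)
    qed simp
  qed
  show ?thesis
    using wrap assms(3) \<open>p > 0\<close>
    by (intro nth_equalityI) (auto simp: nth_cyclic_window p_def add.assoc)
qed

lemma circulation_cycle:
  assumes c: "circulation b k \<eta>" and "k \<ge> 1" and "s0 \<in> strings b k" "\<eta> s0 > 0"
  obtains y where "y \<noteq> []" "set y \<subseteq> {..<b}" "\<And>s. 0 < cyclic_count y k s \<Longrightarrow> 0 < \<eta> s"
proof -
  obtain e where e: "\<And>n. map (\<lambda>u. e (n + u)) [0..<k] \<in> strings b k"
    "\<And>n. \<eta> (map (\<lambda>u. e (n + u)) [0..<k]) > 0"
    using circulation_walk[OF assms] by blast
  define W where "W n = map (\<lambda>u. e (n + u)) [0..<k]" for n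
  have "finite (range W)"
    using e(1) finite_strings by (auto simp: W_def intro: finite_subset)
  then have "\<not> inj W"
    using finite_imageD infinite_UNIV_nat by blast
  then obtain i j where "i < j" "W i = W j"
    unfolding inj_def by (metis linorder_neqE_nat)
  then have same: "e (i + u) = e (j + u)" if "u < k" for u
    using that by (simp add: W_def map_eq_conv)
  define y where "y = map (\<lambda>t. e (i + t)) [0..<j - i]"
  have "e n < b" for n
  proof -
    have "e (n + 0) \<in> (\<lambda>u. e (n + u)) ` set [0..<k]"
      using \<open>k \<ge> 1\<close> by (intro imageI) simp
    then have "e n \<in> set (map (\<lambda>u. e (n + u)) [0..<k])"
      by simp
    then show ?thesis
      using e(1)[of n] by (auto simp: strings_def)
  qed
  then have "set y \<subseteq> {..<b}"
    by (auto simp: y_def)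
  moreover have "0 < \<eta> s" if pos: "0 < cyclic_count y k s" for s
  proof -
    obtain t where "t < j - i" "cyclic_window y k t = s"
      using cyclic_count_pos_imp_window[OF pos] by (auto simp: y_def)
    then show ?thesis
      using cyclic_window_of_repeated_window[OF \<open>i < j\<close> same] e(2)[of "i + t"] by (simp add: y_def)
  qed
  moreover have "y \<noteq> []"
    using \<open>i < j\<close> by (simp add: y_def)
  ultimately show ?thesis
    using that by blast
qed

lemma circulation_subtract_cycle:
  assumes c: "circulation b k \<eta>" and "k \<ge> 1" "set y \<subseteq> {..<b}"
    and le: "\<And>s. s \<in> strings b k \<Longrightarrow> a * cyclic_count y k s \<le> \<eta> s"
  shows "circulation b k (\<lambda>s. \<eta> s - a * cyclic_count y k s)"
  unfolding circulation_def
proof (intro conjI allI impI ballI)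
  fix s assume "s \<notin> strings b k"
  then show "\<eta> s - a * cyclic_count y k s = 0"
    using c cyclic_count_eq_0[OF assms(3)] by (simp add: circulation_def)
next
  fix s assume "s \<in> strings b k"
  then show "0 \<le> \<eta> s - a * cyclic_count y k s"
    using le by simp
next
  fix v assume "v \<in> strings b (k - 1)"
  then show "(\<Sum>a'<b. \<eta> (a' # v) - a * cyclic_count y k (a' # v))
      = (\<Sum>a'<b. \<eta> (v @ [a']) - a * cyclic_count y k (v @ [a']))"
    using c sum_cyclic_count_Cons[OF assms(3,2)] sum_cyclic_count_snoc[OF assms(3,2)]
    by (simp add: circulation_def sum_subtractf sum_distrib_left[symmetric])
qed

lemma circulation_remove_cycle:
  assumes circ: "circulation b k \<eta>" and "k \<ge> 1" and "s0 \<in> strings b k" "\<eta> s0 \<noteq> 0"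
  obtains y c \<eta>' where "set y \<subseteq> {..<b}" "0 \<le> c" "circulation b k \<eta>'"
    "\<And>s. \<eta> s = \<eta>' s + c * cyclic_count y k s"
    "{s \<in> strings b k. \<eta>' s \<noteq> 0} \<subset> {s \<in> strings b k. \<eta> s \<noteq> 0}"
proof -
  have nonneg: "\<And>s. s \<in> strings b k \<Longrightarrow> 0 \<le> \<eta> s"
    using circ by (simp add: circulation_def)
  have "0 < \<eta> s0"
    using assms(4) nonneg[OF assms(3)] by simp
  then obtain y where y: "y \<noteq> []" "set y \<subseteq> {..<b}" "\<And>s. 0 < cyclic_count y k s \<Longrightarrow> 0 < \<eta> s"
    using circulation_cycle[OF circ \<open>k \<ge> 1\<close> assms(3)] by blast
  \<comment> \<open>subtract the largest multiple of the cycle that keeps \<open>\<eta>\<close> nonnegative\<close>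
  define P where "P = {s \<in> strings b k. 0 < cyclic_count y k s}"
  define c where "c = Min ((\<lambda>s. \<eta> s / cyclic_count y k s) ` P)"
  have "finite P"
    using finite_strings by (simp add: P_def)
  have "cyclic_window y k 0 \<in> P"
    using y(1) cyclic_window_in_strings[OF y(2,1)]
    by (auto simp: P_def cyclic_count_def intro!: sum_pos2[of _ 0])
  then have "c \<in> (\<lambda>s. \<eta> s / cyclic_count y k s) ` P"
    unfolding c_def using \<open>finite P\<close> by (intro Min_in) auto
  then obtain sm where sm: "sm \<in> P" "c = \<eta> sm / cyclic_count y k sm"
    by blast
  have c_le: "c * cyclic_count y k s \<le> \<eta> s" if "s \<in> strings b k" for s
  proof (cases "s \<in> P")
    case True
    then have "c \<le> \<eta> s / cyclic_count y k s"
      using \<open>finite P\<close> by (simp add: c_def)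
    with True show ?thesis
      by (simp add: P_def pos_le_divide_eq)
  next
    case False
    then show ?thesis
      using that cyclic_count_nonneg[of y k s] nonneg by (simp add: P_def)
  qed
  have "0 < c"
    using sm y(3) by (simp add: P_def)
  define \<eta>' where "\<eta>' s = \<eta> s - c * cyclic_count y k s" for s
  have "circulation b k \<eta>'"
    unfolding \<eta>'_def using circ \<open>k \<ge> 1\<close> y(2) c_le by (rule circulation_subtract_cycle)
  moreover have "{s \<in> strings b k. \<eta>' s \<noteq> 0} \<subset> {s \<in> strings b k. \<eta> s \<noteq> 0}"
  proof
    show "{s \<in> strings b k. \<eta>' s \<noteq> 0} \<subseteq> {s \<in> strings b k. \<eta> s \<noteq> 0}"
    proof
      fix s assume "s \<in> {s \<in> strings b k. \<eta>' s \<noteq> 0}"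
      then have "s \<in> strings b k" "\<eta> s \<noteq> 0 \<or> 0 < cyclic_count y k s"
        using cyclic_count_nonneg[of y k s] by (auto simp: \<eta>'_def)
      then show "s \<in> {s \<in> strings b k. \<eta> s \<noteq> 0}"
        using y(3)[of s] by auto
    qed
    have "0 < cyclic_count y k sm" "sm \<in> strings b k"
      using sm(1) by (auto simp: P_def)
    then have "\<eta>' sm = 0" "\<eta> sm \<noteq> 0" "sm \<in> strings b k"
      using sm(2) y(3)[of sm] by (auto simp: \<eta>'_def)
    then show "{s \<in> strings b k. \<eta>' s \<noteq> 0} \<noteq> {s \<in> strings b k. \<eta> s \<noteq> 0}"
      by blast
  qed
  ultimately show ?thesis
    using that[OF y(2) less_imp_le[OF \<open>0 < c\<close>]] by (simp add: \<eta>'_def)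
qed

lemma circulation_cyclically_approximable:
  assumes "circulation b k \<eta>" "k \<ge> 1"
  shows "cyclically_approximable b k \<eta>"
  using assms(1)
proof (induction "card {s \<in> strings b k. \<eta> s \<noteq> 0}" arbitrary: \<eta> rule: less_induct)
  case less
  show ?case
  proof (cases "\<exists>s\<in>strings b k. \<eta> s \<noteq> 0")
    case False
    then have "\<eta> = (\<lambda>s. 0 * cyclic_count [] k s)"
      using less.prems by (auto simp: circulation_def)
    then show ?thesis
      using cyclically_approximable_cyclic_count[of "[]" b 0 k] by simp
  next
    case True
    then obtain y c \<eta>' where y: "set y \<subseteq> {..<b}" "0 \<le> c" "circulation b k \<eta>'"
      "\<And>s. \<eta> s = \<eta>' s + c * cyclic_count y k s"
      "{s \<in> strings b k. \<eta>' s \<noteq> 0} \<subset> {s \<in> strings b k. \<eta> s \<noteq> 0}"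
      using circulation_remove_cycle[OF less.prems assms(2)] by blast
    have "card {s \<in> strings b k. \<eta>' s \<noteq> 0} < card {s \<in> strings b k. \<eta> s \<noteq> 0}"
      using y(5) by (rule psubset_card_mono[rotated]) (simp add: finite_strings)
    then have "cyclically_approximable b k \<eta>'"
      using y(3) by (rule less.hyps)
    then have "cyclically_approximable b k (\<lambda>s. \<eta>' s + c * cyclic_count y k s)"
      using cyclically_approximable_cyclic_count[OF y(1,2)] by (rule cyclically_approximable_add)
    moreover have "\<eta> = (\<lambda>s. \<eta>' s + c * cyclic_count y k s)"
      using y(4) by blast
    ultimately show ?thesis
      by simp
  qed
qed

lemma normalization_error:
  fixes c S a :: real
  assumes "S \<ge> 1 / 2" "\<bar>S - 1\<bar> \<le> a" "0 \<le> c" "c \<le> 2"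
  shows "\<bar>c / S - c\<bar> \<le> 4 * a"
proof -
  have "\<bar>c / S - c\<bar> * S = \<bar>(c / S - c) * S\<bar>"
    using assms(1) by (simp add: abs_mult)
  also have "\<dots> = \<bar>c * (1 - S)\<bar>"
    using assms(1) by (simp add: left_diff_distrib right_diff_distrib)
  also have "\<dots> = c * \<bar>S - 1\<bar>"
    using assms(3) by (simp add: abs_mult abs_minus_commute)
  also have "\<dots> \<le> 2 * a"
    using assms(2-4) by (intro mult_mono) auto
  finally have "\<bar>c / S - c\<bar> * (1 / 2) \<le> 2 * a"
    using assms(1) mult_left_mono[of "1 / 2" S "\<bar>c / S - c\<bar>"] by linarith
  then show ?thesis
    by simp
qed

lemma normalized_approximation:
  fixes \<eta> :: "'a \<Rightarrow> real"
  assumes E: "finite E" "(\<Sum>s\<in>E. \<eta> s) = 1" "\<And>s. s \<in> E \<Longrightarrow> 0 \<le> \<eta> s" and "\<epsilon> > 0"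
  obtains e where "e > 0"
    "\<And>c. (\<And>s. s \<in> E \<Longrightarrow> 0 \<le> c s) \<Longrightarrow> (\<And>s. s \<in> E \<Longrightarrow> \<bar>c s - \<eta> s\<bar> < e) \<Longrightarrow>
       0 < (\<Sum>s\<in>E. c s) \<and> (\<forall>s\<in>E. \<bar>c s / (\<Sum>s\<in>E. c s) - \<eta> s\<bar> < \<epsilon>)"
proof
  define M where "M = real (card E)"
  define e where "e = min (1 / (2 * M + 2)) (\<epsilon> / (4 * M + 2))"
  have "M \<ge> 0"
    by (simp add: M_def)
  then show "e > 0"
    using \<open>\<epsilon> > 0\<close> by (simp add: e_def)
  have Me: "M * e \<le> 1 / 2"
  proof -
    have "M * e \<le> M * (1 / (2 * M + 2))"
      using \<open>M \<ge> 0\<close> by (intro mult_left_mono) (auto simp: e_def)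
    also have "\<dots> \<le> 1 / 2"
      using \<open>M \<ge> 0\<close> by (simp add: field_simps)
    finally show ?thesis .
  qed
  have "(4 * M + 1) * e < (4 * M + 2) * e"
    using \<open>e > 0\<close> by simp
  also have "\<dots> \<le> (4 * M + 2) * (\<epsilon> / (4 * M + 2))"
    using \<open>M \<ge> 0\<close> by (intro mult_left_mono) (auto simp: e_def)
  also have "\<dots> = \<epsilon>"
    using \<open>M \<ge> 0\<close> by simp
  finally have budget: "4 * (M * e) + e < \<epsilon>"
    by (simp add: algebra_simps)
  fix c assume c: "\<And>s. s \<in> E \<Longrightarrow> 0 \<le> c s" "\<And>s. s \<in> E \<Longrightarrow> \<bar>c s - \<eta> s\<bar> < e"
  define S where "S = (\<Sum>s\<in>E. c s)"
  have "\<bar>S - 1\<bar> = \<bar>\<Sum>s\<in>E. c s - \<eta> s\<bar>"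
    by (simp add: S_def E(2) sum_subtractf)
  also have "\<dots> \<le> (\<Sum>s\<in>E. e)"
    using c(2) by (intro order_trans[OF sum_abs] sum_mono less_imp_le)
  finally have S1: "\<bar>S - 1\<bar> \<le> M * e"
    by (simp add: M_def)
  then have "S \<ge> 1 / 2"
    using Me by linarith
  have "\<bar>c s / S - \<eta> s\<bar> < \<epsilon>" if s: "s \<in> E" for s
  proof -
    have "\<eta> s \<le> 1"
      using member_le_sum[of s E \<eta>] E s by simp
    moreover have "e \<le> 1 / (2 * M + 2)"
      by (simp add: e_def)
    moreover have "1 / (2 * M + 2) \<le> 1 / 2"
      using \<open>M \<ge> 0\<close> by (simp add: field_simps)
    ultimately have "c s \<le> 2"
      using c(2)[OF s] by linarith
    then have "\<bar>c s / S - c s\<bar> \<le> 4 * (M * e)"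
      using normalization_error[OF \<open>S \<ge> 1 / 2\<close> S1 c(1)[OF s]] by simp
    with c(2)[OF s] budget show ?thesis
      unfolding abs_le_iff abs_less_iff by linarith
  qed
  then show "0 < (\<Sum>s\<in>E. c s) \<and> (\<forall>s\<in>E. \<bar>c s / (\<Sum>s\<in>E. c s) - \<eta> s\<bar> < \<epsilon>)"
    using \<open>S \<ge> 1 / 2\<close> by (simp add: S_def)
qed

lemma Delta_imp_circulation: "\<eta> \<in> Delta b k \<Longrightarrow> circulation b k \<eta>"
  by (simp add: Delta_def circulation_def)

lemma Delta_cyclic_approximation:
  assumes "k \<ge> 1" "\<eta> \<in> Delta b k" "\<epsilon> > 0"
  obtains z where "z \<noteq> []" "set z \<subseteq> {..<b}"
    "\<And>s. s \<in> strings b k \<Longrightarrow> \<bar>cyclic_count z k s / real (length z) - \<eta> s\<bar> < \<epsilon>"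
proof -
  have \<eta>: "(\<Sum>s\<in>strings b k. \<eta> s) = 1" "\<And>s. s \<in> strings b k \<Longrightarrow> 0 \<le> \<eta> s"
    using assms(2) by (simp_all add: Delta_def)
  obtain e where "e > 0" and e: "\<And>c. (\<And>s. s \<in> strings b k \<Longrightarrow> 0 \<le> c s) \<Longrightarrow>
      (\<And>s. s \<in> strings b k \<Longrightarrow> \<bar>c s - \<eta> s\<bar> < e) \<Longrightarrow>
      0 < (\<Sum>s\<in>strings b k. c s) \<and> (\<forall>s\<in>strings b k. \<bar>c s / (\<Sum>s\<in>strings b k. c s) - \<eta> s\<bar> < \<epsilon>)"
    using normalized_approximation[OF finite_strings \<eta> \<open>\<epsilon> > 0\<close>] by blast
  obtain z t where z: "set z \<subseteq> {..<b}" "0 \<le> t" "\<forall>s\<in>strings b k. \<bar>t * cyclic_count z k s - \<eta> s\<bar> < e"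
    using circulation_cyclically_approximable[OF Delta_imp_circulation[OF assms(2)] assms(1)] \<open>e > 0\<close>
    unfolding cyclically_approximable_def by blast
  have "(\<Sum>s\<in>strings b k. t * cyclic_count z k s) = t * real (length z)"
    by (simp add: sum_distrib_left[symmetric] sum_cyclic_count[OF z(1)])
  with e[of "\<lambda>s. t * cyclic_count z k s"] z(2,3) cyclic_count_nonneg
  have "0 < t * real (length z)"
    "\<forall>s\<in>strings b k. \<bar>t * cyclic_count z k s / (t * real (length z)) - \<eta> s\<bar> < \<epsilon>"
    by simp_all
  moreover from this(1) have "z \<noteq> []" "t \<noteq> 0"
    by auto
  ultimately show ?thesis
    using that z(1) by simp
qed

section \<open>Digit frequencies and their cluster points\<close>

lemma open_fun_contains_box:
  fixes U :: "('a \<Rightarrow> real) set"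
  assumes "open U" "\<eta> \<in> U"
  obtains D \<delta> where "finite D" "\<delta> > 0" "\<And>p. (\<forall>s\<in>D. \<bar>p s - \<eta> s\<bar> < \<delta>) \<Longrightarrow> p \<in> U"
proof -
  have "openin (product_topology (\<lambda>i. euclidean) UNIV) U"
    using assms(1) by (simp add: euclidean_product_topology)
  from product_topology_open_contains_basis[OF this assms(2)]
  obtain X where X: "\<eta> \<in> (\<Pi>\<^sub>E i\<in>UNIV. X i)" "\<And>i. open (X i)" "finite {i. X i \<noteq> UNIV}"
    "(\<Pi>\<^sub>E i\<in>UNIV. X i) \<subseteq> U"
    by auto
  define D where "D = {i. X i \<noteq> UNIV}"
  have "\<exists>e>0. ball (\<eta> i) e \<subseteq> X i" for i
    using X(1,2) open_contains_ball by blast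
  then obtain e where e: "\<And>i. e i > 0" "\<And>i. ball (\<eta> i) (e i) \<subseteq> X i"
    by metis
  define \<delta> where "\<delta> = Min (insert 1 (e ` D))"
  have "finite D"
    using X(3) by (simp add: D_def)
  moreover have "\<delta> > 0"
    unfolding \<delta>_def using \<open>finite D\<close> e(1) by (subst Min_gr_iff) auto
  moreover have "p \<in> U" if p: "\<forall>s\<in>D. \<bar>p s - \<eta> s\<bar> < \<delta>" for p
  proof -
    have "p i \<in> X i" for i
    proof (cases "i \<in> D")
      case True
      then have "\<delta> \<le> e i"
        using \<open>finite D\<close> by (simp add: \<delta>_def)
      with p True have "p i \<in> ball (\<eta> i) (e i)"
        by (auto simp: dist_real_def)
      then show ?thesis
        using e(2) by blast
    qed (auto simp: D_def)
    then show ?thesis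
      using X(4) by auto
  qed
  ultimately show ?thesis
    using that by blast
qed

definition digit_window :: "nat \<Rightarrow> real \<Rightarrow> nat \<Rightarrow> nat \<Rightarrow> nat list" where
  "digit_window b x k i = map (\<lambda>j. digits b x (i + j)) [0..<k]"

lemma length_digit_window [simp]: "length (digit_window b x k i) = k"
  by (simp add: digit_window_def)

lemma tl_digit_window: "tl (digit_window b x k i) = digit_window b x (k - 1) (Suc i)"
  by (rule nth_equalityI) (auto simp: digit_window_def nth_tl)

lemma butlast_digit_window: "butlast (digit_window b x k i) = digit_window b x (k - 1) i"
  by (rule nth_equalityI) (auto simp: digit_window_def nth_butlast)

lemma digit_window_in_strings: "b \<ge> 2 \<Longrightarrow> 0 < x \<Longrightarrow> x \<le> 1 \<Longrightarrow> digit_window b x k i \<in> strings b k"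
  using digits_less by (auto simp: digit_window_def strings_def)

lemma freq_eq_sum:
  assumes "length s = k"
  shows "freq b s n x = (\<Sum>i\<in>{1..n}. if digit_window b x k i = s then 1 else 0) / real n"
proof -
  have "{i \<in> {1..n}. \<forall>j<length s. digits b x (i + j) = s ! j} = {i \<in> {1..n}. digit_window b x k i = s}"
    using assms by (auto simp: digit_window_def list_eq_iff_nth_eq)
  then show ?thesis
    by (simp add: freq_def sum.If_cases Int_def)
qed

lemma sum_freq:
  assumes b: "b \<ge> 2" and x: "0 < x" "x \<le> 1" and "n \<ge> 1"
  shows "(\<Sum>s\<in>strings b k. freq b s n x) = 1"
proof -
  have "(\<Sum>s\<in>strings b k. \<Sum>i\<in>{1..n}. if digit_window b x k i = s then 1 else 0) = real (card {1..n})"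
    using digit_window_in_strings[OF b x] finite_strings by (intro sum_indicator_fibres) auto
  then show ?thesis
    using \<open>n \<ge> 1\<close> by (simp add: freq_eq_sum strings_def sum_divide_distrib[symmetric])
qed

lemma freq_imbalance:
  assumes b: "b \<ge> 2" and k: "k \<ge> 1" and x: "0 < x" "x \<le> 1" and "n \<ge> 1" "v \<in> strings b (k - 1)"
  shows "\<bar>(\<Sum>a<b. freq b (a # v) n x) - (\<Sum>a<b. freq b (v @ [a]) n x)\<bar> \<le> 1 / real n"
proof -
  have lengths: "length (a # v) = k" "length (v @ [a]) = k" for a
    using assms(6) k by (auto simp: strings_def)
  have ne: "digit_window b x k i \<noteq> []" for i
    using k by (metis length_digit_window list.size(3) not_one_le_zero)
  have hd_last: "hd (digit_window b x k i) < b" "last (digit_window b x k i) < b" for i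
    using hd_in_set[OF ne] last_in_set[OF ne] digit_window_in_strings[OF b x, of k i] by (auto simp: strings_def)
  define g where "g i = (if digit_window b x (k - 1) i = v then 1 else (0::real))" for i
  have A: "(\<Sum>a<b. freq b (a # v) n x) = (\<Sum>i\<in>{1..n}. g (Suc i)) / real n"
    using sum_indicator_Cons[of "{1..n}" "digit_window b x k" b v] ne hd_last
    by (simp add: freq_eq_sum[OF lengths(1)] sum_divide_distrib[symmetric] tl_digit_window g_def)
  have B: "(\<Sum>a<b. freq b (v @ [a]) n x) = (\<Sum>i\<in>{1..n}. g i) / real n"
    using sum_indicator_snoc[of "{1..n}" "digit_window b x k" b v] ne hd_last
    by (simp add: freq_eq_sum[OF lengths(2)] sum_divide_distrib[symmetric] butlast_digit_window g_def)
  have "(\<Sum>i\<in>{1..n}. g (Suc i)) - (\<Sum>i\<in>{1..n}. g i) = g (Suc n) - g 1"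
    using sum_Suc_diff[of 1 n g] assms(5) by (simp add: sum_subtractf)
  then have "(\<Sum>a<b. freq b (a # v) n x) - (\<Sum>a<b. freq b (v @ [a]) n x) = (g (Suc n) - g 1) / real n"
    unfolding A B diff_divide_distrib[symmetric] by (rule arg_cong)
  then have "\<bar>(\<Sum>a<b. freq b (a # v) n x) - (\<Sum>a<b. freq b (v @ [a]) n x)\<bar> = \<bar>g (Suc n) - g 1\<bar> / real n"
    by (simp only: abs_divide abs_of_nat)
  also have "\<dots> \<le> 1 / real n"
    by (rule divide_right_mono) (simp_all add: g_def)
  finally show ?thesis .
qed

lemma Gamma_mem_closed:
  assumes "is_ideal I" "\<eta> \<in> Gamma b k x I" "continuous_on UNIV g" "closed C"
    and "eventually (\<lambda>n. g (freq_vec b k n x) \<in> C) sequentially"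
  shows "g \<eta> \<in> C"
proof (rule ccontr)
  assume "g \<eta> \<notin> C"
  have "open (g -` (- C))"
    using assms(3,4) by (intro open_vimage) auto
  moreover have "\<eta> \<in> g -` (- C)"
    using \<open>g \<eta> \<notin> C\<close> by simp
  ultimately have "{n. n \<ge> 1 \<and> freq_vec b k n x \<in> g -` (- C)} \<notin> I"
    using assms(2) unfolding Gamma_def by blast
  moreover obtain N where N: "\<And>n. n \<ge> N \<Longrightarrow> g (freq_vec b k n x) \<in> C"
    using assms(5) unfolding eventually_sequentially by blast
  have "{n. n \<ge> 1 \<and> freq_vec b k n x \<in> g -` (- C)} \<subseteq> {..<N}"
    using N by (auto simp: not_le[symmetric])
  then have "finite {n. n \<ge> 1 \<and> freq_vec b k n x \<in> g -` (- C)}"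
    by (rule finite_subset) simp
  ultimately show False
    using is_ideal_finite[OF assms(1)] by blast
qed

lemma Gamma_eq_limit:
  fixes g :: "(nat list \<Rightarrow> real) \<Rightarrow> real"
  assumes "is_ideal I" "\<eta> \<in> Gamma b k x I" "continuous_on UNIV g"
    and "(\<lambda>n. g (freq_vec b k n x)) \<longlonglongrightarrow> L"
  shows "g \<eta> = L"
proof -
  have "dist (g \<eta>) L \<le> 0 + \<delta>" if "\<delta> > 0" for \<delta>
  proof -
    have "eventually (\<lambda>n. dist (g (freq_vec b k n x)) L < \<delta>) sequentially"
      using assms(4) that by (rule tendstoD)
    then have "eventually (\<lambda>n. g (freq_vec b k n x) \<in> cball L \<delta>) sequentially"
      by (rule eventually_mono) (simp add: dist_commute)
    then have "g \<eta> \<in> cball L \<delta>"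
      by (intro Gamma_mem_closed[OF assms(1-3)]) auto
    then show ?thesis
      by (simp add: dist_commute)
  qed
  then have "dist (g \<eta>) L \<le> 0"
    by (rule field_le_epsilon)
  then show ?thesis
    by simp
qed

lemma Gamma_subset_Delta:
  assumes "is_ideal I" "b \<ge> 2" "k \<ge> 1" "0 < x" "x \<le> 1"
  shows "Gamma b k x I \<subseteq> Delta b k"
proof
  fix \<eta> assume \<eta>: "\<eta> \<in> Gamma b k x I"
  have proj: "continuous_on UNIV (\<lambda>p::nat list \<Rightarrow> real. p s)" for s
    by simp
  have off: "\<eta> s \<in> {0}" if "s \<notin> strings b k" for s
    using that by (intro Gamma_mem_closed[OF assms(1) \<eta> proj]) (auto simp: freq_vec_def)
  have nonneg: "\<eta> s \<in> {0..}" for s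
    by (intro Gamma_mem_closed[OF assms(1) \<eta> proj]) (auto simp: freq_vec_def freq_def)
  have total: "(\<Sum>s\<in>strings b k. \<eta> s) = 1"
  proof (rule Gamma_eq_limit[OF assms(1) \<eta>])
    show "continuous_on UNIV (\<lambda>p::nat list \<Rightarrow> real. \<Sum>s\<in>strings b k. p s)"
      using proj by (intro continuous_intros)
    have "eventually (\<lambda>n. (\<Sum>s\<in>strings b k. freq_vec b k n x s) = 1) sequentially"
      using eventually_ge_at_top[of 1] by (rule eventually_mono) (simp add: freq_vec_def sum_freq[OF assms(2,4,5)])
    then show "(\<lambda>n. \<Sum>s\<in>strings b k. freq_vec b k n x s) \<longlonglongrightarrow> 1"
      by (rule tendsto_eventually)
  qed
  have balanced: "(\<Sum>a<b. \<eta> (a # v)) - (\<Sum>a<b. \<eta> (v @ [a])) = 0" if v: "v \<in> strings b (k - 1)" for v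
  proof (rule Gamma_eq_limit[OF assms(1) \<eta>])
    show "continuous_on UNIV (\<lambda>p::nat list \<Rightarrow> real. (\<Sum>a<b. p (a # v)) - (\<Sum>a<b. p (v @ [a])))"
      using proj by (intro continuous_intros)
    let ?D = "\<lambda>n. (\<Sum>a<b. freq_vec b k n x (a # v)) - (\<Sum>a<b. freq_vec b k n x (v @ [a]))"
    have D: "?D n = (\<Sum>a<b. freq b (a # v) n x) - (\<Sum>a<b. freq b (v @ [a]) n x)" for n
      using v assms(3) by (simp add: freq_vec_def Cons_in_strings snoc_in_strings)
    have "eventually (\<lambda>n. norm (?D n) \<le> 1 / real n) sequentially"
      using eventually_ge_at_top[of 1] by (rule eventually_mono) (simp add: D freq_imbalance[OF assms(2-5) _ v])
    then show "?D \<longlonglongrightarrow> 0"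
      using lim_1_over_n by (rule Lim_null_comparison)
  qed
  show "\<eta> \<in> Delta b k"
    unfolding Delta_def using off nonneg total balanced by simp
qed

section \<open>Escaping the blocks of a meager ideal\<close>

lemma sum_atLeastAtMost_split_prefix:
  fixes g :: "nat \<Rightarrow> 'a::comm_monoid_add"
  assumes "L \<le> n"
  shows "(\<Sum>i\<in>{1..n}. g i) = (\<Sum>i\<in>{1..L}. g i) + (\<Sum>t<n - L. g (L + 1 + t))"
proof -
  obtain d where n: "n = L + d"
    using assms le_Suc_ex by blast
  have "(\<Sum>i\<in>{1..L + d}. g i) = (\<Sum>i\<in>{1..L}. g i) + (\<Sum>t<d. g (L + 1 + t))"
    by (induction d) (simp_all add: add.commute add.left_commute)
  then show ?thesis
    by (simp add: n)
qed

lemma freq_periodic_tail: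
  assumes "z \<noteq> []" and tail: "\<And>t. L + 1 + t \<le> M \<Longrightarrow> digits b x (L + 1 + t) = z ! (t mod length z)"
    and n: "L \<le> n" "n + k \<le> M + 1" "n \<ge> 1" and "length s = k"
  shows "\<bar>freq b s n x - cyclic_count z k s / real (length z)\<bar> \<le> (2 * real L + real (length z)) / real n"
proof -
  define p where "p = length z"
  define S where "S = cyclic_count z k s"
  define g where "g i = (if digit_window b x k i = s then 1 else (0::real))" for i
  have "p > 0" "0 \<le> S" "S \<le> real p"
    using assms(1) cyclic_count_nonneg cyclic_count_le_length by (auto simp: p_def S_def)
  have "digit_window b x k (L + 1 + t) = cyclic_window z k t" if "t < n - L" for t
    using that n tail by (intro nth_equalityI) (auto simp: digit_window_def nth_cyclic_window add.assoc)
  then have split: "(\<Sum>i\<in>{1..n}. g i) = (\<Sum>i\<in>{1..L}. g i) + (\<Sum>t<n - L. if cyclic_window z k t = s then 1 else 0)"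
    using sum_atLeastAtMost_split_prefix[OF n(1), of g] by (simp add: g_def)
  have prefix: "0 \<le> (\<Sum>i\<in>{1..L}. g i)" "(\<Sum>i\<in>{1..L}. g i) \<le> real L"
    using sum_mono[of "{1..L}" g "\<lambda>_. 1"] by (auto simp: g_def intro: sum_nonneg)
  have periodic: "\<bar>(\<Sum>t<n - L. if cyclic_window z k t = s then 1 else (0::real)) - real (n - L) * S / real p\<bar> \<le> S"
    unfolding S_def cyclic_count_def p_def
    by (rule sum_lessThan_periodic_approx) (use cyclic_window_periodic \<open>p > 0\<close> p_def in auto)
  have "real n * S / real p = real (n - L) * S / real p + real L * (S / real p)"
    using n(1) \<open>p > 0\<close> by (simp add: of_nat_diff field_simps)
  moreover have "S / real p \<le> 1"
    using \<open>S \<le> real p\<close> \<open>p > 0\<close> by simp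
  then have "real L * (S / real p) \<le> real L"
    by (rule mult_left_le) simp
  moreover have "0 \<le> real L * (S / real p)"
    using \<open>0 \<le> S\<close> by simp
  ultimately have "\<bar>(\<Sum>i\<in>{1..n}. g i) - real n * S / real p\<bar> \<le> 2 * real L + real p"
    using split prefix periodic \<open>S \<le> real p\<close> unfolding abs_le_iff by linarith
  moreover have "freq b s n x - S / real p = ((\<Sum>i\<in>{1..n}. g i) - real n * S / real p) / real n"
    using n(3) assms(6) by (simp add: freq_eq_sum g_def field_simps)
  ultimately show ?thesis
    using n(3) by (simp add: S_def p_def abs_divide divide_right_mono)
qed

(* The precision 1/(r + 1) is indexed by a natural number so that countably many sets suffice. *)
definition freq_near :: "nat \<Rightarrow> nat \<Rightarrow> nat list \<Rightarrow> nat \<Rightarrow> real \<Rightarrow> nat set" where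
  "freq_near b k z r x = {n. 1 \<le> n \<and>
     (\<forall>s\<in>strings b k. \<bar>freq b s n x - cyclic_count z k s / real (length z)\<bar> < 1 / (real r + 1))}"

definition block_escape :: "(nat \<Rightarrow> nat set) \<Rightarrow> nat \<Rightarrow> nat \<Rightarrow> nat list \<Rightarrow> nat \<Rightarrow> nat \<Rightarrow> real set" where
  "block_escape F b k z r m = {x \<in> {0<..1}. \<forall>j\<ge>m. \<not> F j \<subseteq> freq_near b k z r x}"

lemma freq_near_periodic_tail:
  assumes "z \<noteq> []" "\<And>t. L + 1 + t \<le> M \<Longrightarrow> digits b x (L + 1 + t) = z ! (t mod length z)"
    and n: "(2 * L + length z) * (r + 1) < n" "n + k \<le> M + 1"
  shows "n \<in> freq_near b k z r x"
proof -
  have "L \<le> n" "n \<ge> 1"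
    using n(1) assms(1) by (auto intro: le_less_trans[OF _ n(1)] simp: algebra_simps)
  have "real ((2 * L + length z) * (r + 1)) < real n"
    using n(1) by (simp only: of_nat_less_iff)
  then have "(2 * real L + real (length z)) / real n < 1 / (real r + 1)"
    using \<open>n \<ge> 1\<close> by (simp add: field_simps)
  moreover have "\<bar>freq b s n x - cyclic_count z k s / real (length z)\<bar> \<le> (2 * real L + real (length z)) / real n"
    if "s \<in> strings b k" for s
  proof -
    have "length s = k"
      using that by (auto simp: strings_def)
    from freq_periodic_tail[OF assms(1,2) \<open>L \<le> n\<close> n(2) \<open>n \<ge> 1\<close> this] show ?thesis .
  qed
  ultimately show ?thesis
    using \<open>n \<ge> 1\<close> by (force simp: freq_near_def)
qed

lemma open_contains_adic_intervals:
  assumes b: "b \<ge> 2" and V: "openin (subtopology euclideanreal {0<..1}) V" "V \<noteq> {}"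
  obtains c L where "0 < c" "c \<le> 1"
    "\<And>v M. (\<And>i. v i < b) \<Longrightarrow> (\<And>i. 1 \<le> i \<Longrightarrow> i \<le> L \<Longrightarrow> v i = digits b c i) \<Longrightarrow> L \<le> M
      \<Longrightarrow> adic_interval b v M \<subseteq> V"
proof -
  obtain T where T: "open T" "V = T \<inter> {0<..1}"
    using V(1) by (auto simp: openin_subtopology)
  obtain c where c: "c \<in> V"
    using V(2) by blast
  then obtain \<rho> where "\<rho> > 0" "ball c \<rho> \<subseteq> T"
    using T open_contains_ball by blast
  obtain L where L: "(1 / real b) ^ L < \<rho>"
    using real_arch_pow_inv[OF \<open>\<rho> > 0\<close>, of "1 / real b"] b by auto
  have c01: "0 < c" "c \<le> 1"
    using c T(2) by auto
  have "adic_interval b v M \<subseteq> V"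
    if v: "\<And>i. v i < b" "\<And>i. 1 \<le> i \<Longrightarrow> i \<le> L \<Longrightarrow> v i = digits b c i" and "L \<le> M" for v M
  proof -
    have "adic_interval b v M \<subseteq> adic_interval b v L"
      using b v(1) \<open>L \<le> M\<close> by (intro adic_interval_mono) auto
    also have "\<dots> \<subseteq> ball c ((1 / real b) ^ L)"
      using adic_interval_near[where b=b and c=c and L=L and v=v, OF b c01 v(2)] .
    also have "\<dots> \<subseteq> ball c \<rho>"
      using L by (intro subset_ball) simp
    finally have "adic_interval b v M \<subseteq> T"
      using \<open>ball c \<rho> \<subseteq> T\<close> by blast
    moreover have "adic_interval b v M \<subseteq> {0<..1}"
      using b v(1) by (intro adic_interval_subset_unit) auto
    ultimately show ?thesis
      using T(2) by blast
  qed
  with c01 show ?thesis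
    using that by blast
qed

lemma block_escape_nowhere_dense:
  assumes b: "b \<ge> 2" and z: "z \<noteq> []" "set z \<subseteq> {..<b}"
    and F: "\<And>j. finite (F j)" "\<And>j n. n \<in> F j \<Longrightarrow> j < n"
  shows "nowhere_dense_in (subtopology euclideanreal {0<..1}) (block_escape F b k z r m)"
proof (rule nowhere_dense_inI)
  show "block_escape F b k z r m \<subseteq> topspace (subtopology euclideanreal {0<..1})"
    by (auto simp: block_escape_def)
next
  fix V assume "openin (subtopology euclideanreal {0<..1}) V" "V \<noteq> {}"
  then obtain c L where c01: "0 < c" "c \<le> 1" and inV:
    "\<And>v M. (\<And>i. v i < b) \<Longrightarrow> (\<And>i. 1 \<le> i \<Longrightarrow> i \<le> L \<Longrightarrow> v i = digits b c i) \<Longrightarrow> L \<le> M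
      \<Longrightarrow> adic_interval b v M \<subseteq> V"
    using open_contains_adic_intervals[OF b] by metis
  \<comment> \<open>keep the first \<open>L\<close> digits of \<open>c\<close>, then repeat \<open>z\<close> long enough to cover the block \<open>F j\<close>\<close>
  define p where "p = length z"
  define j where "j = m + (2 * L + p) * (r + 1)"
  define M where "M = Max (insert 0 (F j)) + k + L"
  define v where "v i = (if i \<le> L then digits b c i else z ! ((i - L - 1) mod p))" for i
  define W where "W = adic_interval b v M"
  have v_less: "v i < b" for i
  proof (cases "i \<le> L")
    case False
    have "z ! ((i - L - 1) mod p) \<in> set z"
      using z(1) by (simp add: p_def)
    with False z(2) show ?thesis
      by (auto simp: v_def)
  qed (simp add: v_def digits_less[OF b c01])
  have "W \<subseteq> V"
    unfolding W_def
  proof (rule inV)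
    show "v i = digits b c i" if "1 \<le> i" "i \<le> L" for i
      using that by (simp add: v_def)
  qed (simp_all add: v_less M_def)
  moreover have "openin (subtopology euclideanreal {0<..1}) W"
    using adic_interval_subset_unit[of b M v] b v_less
    by (auto simp: openin_subtopology W_def adic_interval_def intro!: exI[of _ W])
  moreover have "W \<noteq> {}"
    using b by (simp add: W_def adic_interval_nonempty)
  moreover have near: "F j \<subseteq> freq_near b k z r x" if "x \<in> W" for x
  proof
    fix n assume "n \<in> F j"
    have "digits b x (L + 1 + t) = z ! (t mod length z)" if "L + 1 + t \<le> M" for t
      using adic_interval_digits[OF b _ \<open>x \<in> W\<close>[unfolded W_def], of "L + 1 + t"] v_less that
      by (simp add: v_def p_def)
    moreover have "(2 * L + length z) * (r + 1) < n"
      using F(2)[OF \<open>n \<in> F j\<close>] by (simp add: j_def p_def)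
    moreover have "n \<le> Max (insert 0 (F j))"
      using \<open>n \<in> F j\<close> F(1)[of j] by (intro Max_ge) auto
    then have "n + k \<le> M + 1"
      by (simp add: M_def)
    ultimately show "n \<in> freq_near b k z r x"
      by (rule freq_near_periodic_tail[OF z(1)])
  qed
  have "m \<le> j"
    by (simp add: j_def)
  with near have "W \<inter> block_escape F b k z r m = {}"
    unfolding block_escape_def by blast
  ultimately show "\<exists>W. openin (subtopology euclideanreal {0<..1}) W \<and> W \<noteq> {} \<and> W \<subseteq> V
      \<and> W \<inter> block_escape F b k z r m = {}"
    by blast
qed

lemma Gamma_ne_Delta_imp_block_escape:
  assumes I: "is_ideal I" and F: "\<And>A. A \<in> I \<Longrightarrow> \<exists>m. \<forall>j\<ge>m. \<not> F j \<subseteq> A"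
    and b: "b \<ge> 2" and k: "k \<ge> 1" and x: "0 < x" "x \<le> 1" and "Gamma b k x I \<noteq> Delta b k"
  obtains z r m where "z \<noteq> []" "set z \<subseteq> {..<b}" "x \<in> block_escape F b k z r m"
proof -
  obtain \<eta> where \<eta>: "\<eta> \<in> Delta b k" "\<eta> \<notin> Gamma b k x I"
    using Gamma_subset_Delta[OF I b k x] \<open>Gamma b k x I \<noteq> Delta b k\<close> by blast
  then obtain U where U: "open U" "\<eta> \<in> U" "{n. n \<ge> 1 \<and> freq_vec b k n x \<in> U} \<in> I"
    unfolding Gamma_def by blast
  obtain D \<delta> where "\<delta> > 0" and D: "\<And>p. (\<forall>s\<in>D. \<bar>p s - \<eta> s\<bar> < \<delta>) \<Longrightarrow> p \<in> U"
    using open_fun_contains_box[OF U(1,2)] by blast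
  obtain z where z: "z \<noteq> []" "set z \<subseteq> {..<b}"
    "\<And>s. s \<in> strings b k \<Longrightarrow> \<bar>cyclic_count z k s / real (length z) - \<eta> s\<bar> < \<delta> / 2"
    using Delta_cyclic_approximation[OF k \<eta>(1), of "\<delta> / 2"] \<open>\<delta> > 0\<close> by auto
  obtain r :: nat where r: "1 / (real r + 1) < \<delta> / 2"
    using reals_Archimedean[of "\<delta> / 2"] \<open>\<delta> > 0\<close> by (auto simp: inverse_eq_divide add.commute)
  have "freq_near b k z r x \<subseteq> {n. n \<ge> 1 \<and> freq_vec b k n x \<in> U}"
  proof
    fix n assume n: "n \<in> freq_near b k z r x"
    have "\<bar>freq_vec b k n x s - \<eta> s\<bar> < \<delta>" for s
    proof (cases "s \<in> strings b k")
      case True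
      then have "\<bar>freq b s n x - cyclic_count z k s / real (length z)\<bar> < 1 / (real r + 1)"
        using n by (simp add: freq_near_def)
      with z(3)[OF True] r True show ?thesis
        unfolding freq_vec_def abs_less_iff by simp
    next
      case False
      then show ?thesis
        using \<eta>(1) \<open>\<delta> > 0\<close> by (simp add: freq_vec_def Delta_def)
    qed
    then show "n \<in> {n. n \<ge> 1 \<and> freq_vec b k n x \<in> U}"
      using n D by (simp add: freq_near_def)
  qed
  then have "freq_near b k z r x \<in> I"
    using is_ideal_subset[OF I U(3)] by blast
  then obtain m where "\<forall>j\<ge>m. \<not> F j \<subseteq> freq_near b k z r x"
    using F by blast
  with x z(1,2) that show ?thesis
    by (simp add: block_escape_def)
qed

theorem theorem2p1:
  fixes I :: "nat set set"
  assumes "is_ideal I" and "meager_ideal I"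
  shows "comeager_in (subtopology euclideanreal {0<..1})
           {x \<in> {0<..1}. \<forall>b k. b \<ge> 2 \<and> k \<ge> 1 \<longrightarrow> Gamma b k x I = Delta b k}"
proof -
  obtain F where F: "\<And>j. finite (F j)" "\<And>j n. n \<in> F j \<Longrightarrow> j < n"
    "\<And>A. A \<in> I \<Longrightarrow> \<exists>m. \<forall>j\<ge>m. \<not> F j \<subseteq> A"
    using meager_ideal_block_sequence[OF assms] by blast
  define escape where "escape = (\<lambda>(b, k, z, r, m). block_escape F b k z r m)"
  define params :: "(nat \<times> nat \<times> nat list \<times> nat \<times> nat) set"
    where "params = {(b, k, z, r, m). b \<ge> 2 \<and> z \<noteq> [] \<and> set z \<subseteq> {..<b}}"
  have "meager_in (subtopology euclideanreal {0<..1}) (\<Union>i\<in>params. escape i)"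
    using block_escape_nowhere_dense[OF _ _ _ F(1,2)]
    by (intro meager_in_countable_UN nowhere_dense_imp_meager_in) (auto simp: params_def escape_def)
  moreover have "{0<..1} - {x \<in> {0<..1}. \<forall>b k. b \<ge> 2 \<and> k \<ge> 1 \<longrightarrow> Gamma b k x I = Delta b k}
      \<subseteq> (\<Union>i\<in>params. escape i)"
  proof
    fix x assume "x \<in> {0<..1} - {x \<in> {0<..1}. \<forall>b k. b \<ge> 2 \<and> k \<ge> 1 \<longrightarrow> Gamma b k x I = Delta b k}"
    then obtain b k where "b \<ge> 2" "k \<ge> 1" "0 < x" "x \<le> 1" "Gamma b k x I \<noteq> Delta b k"
      by auto
    from Gamma_ne_Delta_imp_block_escape[OF assms(1) F(3) this] obtain z r m
      where "z \<noteq> []" "set z \<subseteq> {..<b}" "x \<in> block_escape F b k z r m" .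
    with \<open>b \<ge> 2\<close> have "(b, k, z, r, m) \<in> params" "x \<in> escape (b, k, z, r, m)"
      by (simp_all add: params_def escape_def)
    then show "x \<in> (\<Union>i\<in>params. escape i)"
      by blast
  qed
  ultimately show ?thesis
    unfolding comeager_in_def by (auto elim: meager_in_subset)
qed

end
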